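(* Under the assumptions and notation of the context, there exist a neighborhood $\mathcal U$ of $(0,0)$ and $C>0$ such that on $\mathcal U\cap\{t>0\}$ the entries of $\mathcal A=(\tilde a_{ij})$ and of $\partial_x\mathcal A$ satisfy (with $|O(g)|\le C g$ entrywise) \[ \mathcal A=\begin{bmatrix}O(\sqrt a)&O(1)&O(\sqrt a)\\O(a)&O(\sqrt a)&O(1)\\O(a^{3/2})&O(a)&O(a^{5/2})\end{bmatrix},\qquad \partial_x\mathcal A=\begin{bmatrix}O(1)&O(1/\sqrt a)&O(1)\\O(\sqrt a)&O(1)&O(1/\sqrt a)\\O(a)&O(\sqrt a)&O(\sqrt a)\end{bmatrix}. \]
   Context: Let $W\subset\mathbb R$ be an open interval containing $0$, $c,T>0$, and let $a(t,x),b(t,x)$ be real-valued $C^\infty$ functions on $(-c,T)\times W$ with bounded derivatives of all orders. Assume $\Delta:=4a^3-27b^2\ge0$ on $[0,T)\times W$, $a(0,0)=0$, and $a>0$ on $(0,T)\times W$. Let $S=\begin{bmatrix}3&0&-a\\0&2a&3b\\-a&3b&a^2\end{bmatrix}$, $A=\begin{bmatrix}0&a&b\\1&0&0\\0&1&0\end{bmatrix}$, and let $\lambda_1<\lambda_2<\lambda_3$ be the eigenvalues of $S$ on $\mathcal U\cap\{t>0\}$ for a small neighborhood $\mathcal U$ of $(0,0)$. Define vectors $\ell_j=(\ell_{1j},\ell_{2j},\ell_{3j})^t$ by $\ell_1=\big(a(2a-\lambda_1),\ 3b(\lambda_1-3),\ (\lambda_1-3)(\lambda_1-2a)\big)^t$,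 $\ell_2=\big(-3ab,\ (\lambda_2-3)(\lambda_2-a^2)-a^2,\ 3b(\lambda_2-3)\big)^t$, $\ell_3=\big((\lambda_3-2a)(\lambda_3-a^2)-9b^2,\ -3ab,\ -a(\lambda_3-2a)\big)^t$ (eigenvectors of $S$ for $\lambda_1,\lambda_2,\lambda_3$), let $\mathbf t_j=\ell_j/|\ell_j|$, and let $T=(\mathbf t_1,\mathbf t_2,\mathbf t_3)$, an orthogonal matrix with $T^{-1}ST=\mathrm{diag}(\lambda_1,\lambda_2,\lambda_3)$. Set $\mathcal A=T^{-1}AT$. *)

theory Defs
  imports "HOL-Analysis.Analysis"
begin

text \<open>Smoothness with bounded derivatives of
all orders on an open set D: f is continuous and bounded on D, and both first-order
partial derivatives exist at every point of D and are again of this kind (coinductively,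
so all partial derivatives of all orders exist, are continuous, and are bounded on D).\<close>

coinductive smooth_bdd :: "(real \<times> real) set \<Rightarrow> (real \<Rightarrow> real \<Rightarrow> real) \<Rightarrow> bool"
  for D where
  "\<lbrakk> continuous_on D (\<lambda>p. f (fst p) (snd p));
     \<exists>B. \<forall>p\<in>D. \<bar>f (fst p) (snd p)\<bar> \<le> B;
     \<forall>(t,x)\<in>D. ((\<lambda>s. f s x) has_real_derivative ft t x) (at t);
     \<forall>(t,x)\<in>D. ((\<lambda>y. f t y) has_real_derivative fx t x) (at x);
     smooth_bdd D ft; smooth_bdd D fx \<rbrakk> \<Longrightarrow> smooth_bdd D f"

definition Smat :: "real \<Rightarrow> real \<Rightarrow> real^3^3" where
  "Smat a b = vector [vector [3, 0, -a], vector [0, 2*a, 3*b], vector [-a, 3*b, a^2]]"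

definition Amat :: "real \<Rightarrow> real \<Rightarrow> real^3^3" where
  "Amat a b = vector [vector [0, a, b], vector [1, 0, 0], vector [0, 1, 0]]"

definition eigvals :: "real^3^3 \<Rightarrow> real set" where
  "eigvals M = {l. \<exists>v. v \<noteq> 0 \<and> M *v v = l *\<^sub>R v}"

text \<open>The j-th smallest eigenvalue (j = 1,2,3); meaningful when there are exactly three.\<close>
definition eig :: "real^3^3 \<Rightarrow> nat \<Rightarrow> real" where
  "eig M j = sorted_list_of_set (eigvals M) ! (j - 1)"

definition ell1 :: "real \<Rightarrow> real \<Rightarrow> real \<Rightarrow> real^3" where
  "ell1 a b l = vector [a*(2*a - l), 3*b*(l - 3), (l - 3)*(l - 2*a)]"

definition ell2 :: "real \<Rightarrow> real \<Rightarrow> real \<Rightarrow> real^3" where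
  "ell2 a b l = vector [-3*a*b, (l - 3)*(l - a^2) - a^2, 3*b*(l - 3)]"

definition ell3 :: "real \<Rightarrow> real \<Rightarrow> real \<Rightarrow> real^3" where
  "ell3 a b l = vector [(l - 2*a)*(l - a^2) - 9*b^2, -3*a*b, -a*(l - 2*a)]"

definition Tmat :: "real \<Rightarrow> real \<Rightarrow> real^3^3" where
  "Tmat a b = (let S = Smat a b;
      t1 = (1 / norm (ell1 a b (eig S 1))) *\<^sub>R ell1 a b (eig S 1);
      t2 = (1 / norm (ell2 a b (eig S 2))) *\<^sub>R ell2 a b (eig S 2);
      t3 = (1 / norm (ell3 a b (eig S 3))) *\<^sub>R ell3 a b (eig S 3)
    in transpose (vector [t1, t2, t3]))"

definition calA :: "real \<Rightarrow> real \<Rightarrow> real^3^3" where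
  "calA a b = matrix_inv (Tmat a b) ** Amat a b ** Tmat a b"

end

theory Submission
  imports Defs
begin

text \<open>For t > 0 near the origin, a is positive and small and the symmetric matrix S has three
  simple eigenvalues, in [0, a/2], [3a/2, 5a/2] and [5/2, 7/2]. Hence its orthonormal eigenframe T
  depends smoothly on x, and the explicit eigenvectors together with 27 b^2 <= 4 a^3 give the size
  of every entry of T as a power of sqrt a. Entry bounds |M_ij| <= c sqrt(a)^(E_ij) multiply
  according to the min-plus product of the exponent matrices E, which yields the table for
  calA = T^t A T.
  For the x-derivative, differentiating S T = T diag(lambda) shows that K = T^t T_x is skew with
  (lambda_j - lambda_k) K_kj = (T^t S_x T)_kj. The gaps lambda_2 - lambda_1 >= a and
  lambda_3 - lambda_k >= 2 then bound K, and hence T_x = T K, as soon as a_x = O(sqrt a) and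
  b_x = O(a). These two bounds are Glaeser-type inequalities: on an x-interval of half-length
  sqrt a the higher derivatives are bounded, while a >= 0 and the discriminant condition bound
  the values of a and b at its end points.\<close>

section \<open>Entrywise power bounds\<close>

text \<open>With s = sqrt a, mat_bound c s E M is the paper's entrywise O-table for M. A vanishing
  entry satisfies the bound for every exponent; the exponent 9 is used for such entries below.\<close>

definition mat_bound :: "real \<Rightarrow> real \<Rightarrow> int^'n^'m \<Rightarrow> real^'n^'m \<Rightarrow> bool" where
  "mat_bound c s E M \<longleftrightarrow> (\<forall>i j. \<bar>M $ i $ j\<bar> \<le> c * s powi (E $ i $ j))"

definition minplus_mult :: "int^'n^'m \<Rightarrow> int^'p^'n \<Rightarrow> int^'p^'m" where
  "minplus_mult E F = (\<chi> i j. Min (range (\<lambda>k. E $ i $ k + F $ k $ j)))"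

lemma mat_boundD: "mat_bound c s E M \<Longrightarrow> \<bar>M $ i $ j\<bar> \<le> c * s powi (E $ i $ j)"
  by (simp add: mat_bound_def)

lemma nonneg_if_abs_le_mult_pos:
  fixes x c p :: real
  assumes "\<bar>x\<bar> \<le> c * p" "0 < p"
  shows "0 \<le> c"
  using assms by (metis abs_ge_zero order_trans zero_le_mult_iff not_le)

lemma mat_bound_nonneg:
  assumes "mat_bound c s E M" "0 < s"
  shows "0 \<le> c"
  using nonneg_if_abs_le_mult_pos mat_boundD[OF assms(1)] assms(2) zero_less_power_int by blast

lemma mat_bound_mono:
  assumes "mat_bound c s E M" "0 < s" "s \<le> 1" "c \<le> c'" "\<forall>i j. F $ i $ j \<le> E $ i $ j"
  shows "mat_bound c' s F M"
  unfolding mat_bound_def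
proof (intro allI)
  fix i j
  have c: "0 \<le> c" using mat_bound_nonneg assms(1,2) .
  have "\<bar>M $ i $ j\<bar> \<le> c * s powi (E $ i $ j)" by (rule mat_boundD[OF assms(1)])
  also have "\<dots> \<le> c' * s powi (F $ i $ j)"
    using assms c by (intro mult_mono power_int_decreasing) auto
  finally show "\<bar>M $ i $ j\<bar> \<le> c' * s powi (F $ i $ j)" .
qed

lemma mat_bound_add:
  "mat_bound c s E M \<Longrightarrow> mat_bound d s E N \<Longrightarrow> mat_bound (c + d) s E (M + N)"
  unfolding mat_bound_def by (auto intro: order_trans[OF abs_triangle_ineq] simp: distrib_right add_mono)

lemma mat_bound_transpose:
  "mat_bound c s E M \<Longrightarrow> mat_bound c s (transpose E) (transpose M)"
  by (simp add: mat_bound_def transpose_def)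

lemma mat_bound_mult:
  fixes M :: "real^'n^'m" and N :: "real^'p^'n" and c d :: real
  assumes M: "mat_bound c s E M" and N: "mat_bound d s F N" and s: "0 < s" "s \<le> 1"
  shows "mat_bound (CARD('n) * (c * d)) s (minplus_mult E F) (M ** N)"
  unfolding mat_bound_def
proof (intro allI)
  fix i j
  define G where "G = minplus_mult E F $ i $ j"
  have cd: "0 \<le> c" "0 \<le> d" using mat_bound_nonneg M N s by blast+
  have summand: "\<bar>M $ i $ k * N $ k $ j\<bar> \<le> c * d * s powi G" for k
  proof -
    have GE: "G \<le> E $ i $ k + F $ k $ j" unfolding G_def minplus_mult_def by simp
    have "\<bar>M $ i $ k * N $ k $ j\<bar> \<le> (c * s powi (E $ i $ k)) * (d * s powi (F $ k $ j))"
      unfolding abs_mult using mat_boundD[OF M] mat_boundD[OF N] cd s by (intro mult_mono) auto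
    also have "\<dots> = c * d * s powi (E $ i $ k + F $ k $ j)"
      using s by (simp add: power_int_add)
    also have "\<dots> \<le> c * d * s powi G"
      using cd s GE by (intro mult_left_mono power_int_decreasing) auto
    finally show ?thesis .
  qed
  have "\<bar>(M ** N) $ i $ j\<bar> \<le> (\<Sum>k\<in>UNIV. \<bar>M $ i $ k * N $ k $ j\<bar>)"
    unfolding matrix_matrix_mult_def by (simp add: sum_abs)
  also have "\<dots> \<le> (\<Sum>k\<in>(UNIV::'n set). c * d * s powi G)"
    by (intro sum_mono summand)
  finally show "\<bar>(M ** N) $ i $ j\<bar> \<le> CARD('n) * (c * d) * s powi (minplus_mult E F $ i $ j)"
    by (simp add: G_def)
qed

corollary mat_bound_mult_3:
  fixes M :: "real^3^'m" and N :: "real^'p^3" and c d :: real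
  assumes "mat_bound c s E M" "mat_bound d s F N" "0 < s" "s \<le> 1"
  shows "mat_bound (3 * (c * d)) s (minplus_mult E F) (M ** N)"
  using mat_bound_mult[OF assms] by simp

lemma minplus_mult_3:
  fixes E F :: "int^3^3"
  shows "minplus_mult E F $ i $ j = min (E $ i $ 1 + F $ 1 $ j) (min (E $ i $ 2 + F $ 2 $ j) (E $ i $ 3 + F $ 3 $ j))"
  by (simp add: minplus_mult_def UNIV_3)

lemma mat_bound_quotient:
  fixes K N :: "real^'n^'n" and g :: "'n \<Rightarrow> 'n \<Rightarrow> real"
  assumes N: "mat_bound c s E N" and s: "0 < s" "s \<le> 1"
    and quot: "\<And>k j. k \<noteq> j \<Longrightarrow> g k j * K $ k $ j = N $ k $ j"
    and gap: "\<And>k j. k \<noteq> j \<Longrightarrow> s powi (D $ k $ j) \<le> \<bar>g k j\<bar>"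
    and diag: "\<And>j. K $ j $ j = 0"
    and F: "\<forall>k j. k \<noteq> j \<longrightarrow> F $ k $ j \<le> E $ k $ j - D $ k $ j"
  shows "mat_bound c s F K"
  unfolding mat_bound_def
proof (intro allI)
  fix k j
  have c: "0 \<le> c" using mat_bound_nonneg[OF N s(1)] .
  show "\<bar>K $ k $ j\<bar> \<le> c * s powi (F $ k $ j)"
  proof (cases "k = j")
    case True thus ?thesis using c s by (simp add: diag)
  next
    case False
    have "\<bar>K $ k $ j\<bar> * s powi (D $ k $ j) \<le> \<bar>K $ k $ j\<bar> * \<bar>g k j\<bar>"
      using gap[OF False] by (intro mult_left_mono) auto
    also have "\<dots> = \<bar>N $ k $ j\<bar>" using quot[OF False] by (metis abs_mult mult.commute)
    also have "\<dots> \<le> c * s powi (E $ k $ j)" by (rule mat_boundD[OF N])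
    also have "\<dots> = c * s powi (E $ k $ j - D $ k $ j) * s powi (D $ k $ j)"
      using s by (simp flip: power_int_add)
    finally have "\<bar>K $ k $ j\<bar> \<le> c * s powi (E $ k $ j - D $ k $ j)"
      using s by (simp add: mult_le_cancel_right_pos)
    also have "\<dots> \<le> c * s powi (F $ k $ j)"
      using F False c s by (intro mult_left_mono power_int_decreasing) auto
    finally show ?thesis .
  qed
qed

lemma mat_bound_entry_le:
  assumes "mat_bound c s E M" "0 < s" "c \<le> C"
  shows "\<bar>M $ i $ j\<bar> \<le> C * s powi (E $ i $ j)"
  by (rule order_trans[OF mat_boundD[OF assms(1)] mult_right_mono[OF assms(3)]]) (simp add: assms(2) less_imp_le)

lemma sqrt_power_odd:
  assumes "0 < A"
  shows "sqrt A ^ 3 = A powr (3/2)" "sqrt A ^ 5 = A powr (5/2)"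
proof -
  have "sqrt A = A powr (1/2)" using assms by (simp add: powr_half_sqrt)
  thus "sqrt A ^ 3 = A powr (3/2)" "sqrt A ^ 5 = A powr (5/2)"
    using assms by (simp_all add: powr_power)
qed

section \<open>Derivatives of matrix families and of eigenframes\<close>

lemma matrix_mult_entry: "(M ** N) $ i $ j = (\<Sum>k\<in>UNIV. M $ i $ k * N $ k $ j)"
  by (simp add: matrix_matrix_mult_def)

lemma matrix_add_rdistrib: "(A + B) ** C = A ** C + B ** C"
  by (simp add: matrix_matrix_mult_def vec_eq_iff sum.distrib distrib_right)

definition mat_has_derivative :: "(real \<Rightarrow> real^'n^'m) \<Rightarrow> real^'n^'m \<Rightarrow> real \<Rightarrow> bool" where
  "mat_has_derivative M M' x \<longleftrightarrow> (\<forall>i j. ((\<lambda>y. M y $ i $ j) has_real_derivative M' $ i $ j) (at x))"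

lemma mat_has_derivative_mult:
  assumes "mat_has_derivative M M' x" "mat_has_derivative N N' x"
  shows "mat_has_derivative (\<lambda>y. M y ** N y) (M' ** N x + M x ** N') x"
  using assms unfolding mat_has_derivative_def matrix_matrix_mult_def
  by (auto intro!: derivative_eq_intros simp: sum.distrib mult.commute)

lemma mat_has_derivative_transpose:
  "mat_has_derivative M M' x \<Longrightarrow> mat_has_derivative (\<lambda>y. transpose (M y)) (transpose M') x"
  by (simp add: mat_has_derivative_def transpose_def)

lemma mat_has_derivative_transform_open:
  assumes "mat_has_derivative N D x" "open G" "x \<in> G" "\<And>y. y \<in> G \<Longrightarrow> M y = N y"
  shows "mat_has_derivative M D x"
  using assms has_field_derivative_transform_within_open[of "\<lambda>y. N y $ _ $ _" _ x G]
  unfolding mat_has_derivative_def by (metis (no_types, lifting))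

lemma mat_has_derivative_unique:
  "mat_has_derivative M D x \<Longrightarrow> mat_has_derivative M D' x \<Longrightarrow> D = D'"
  unfolding mat_has_derivative_def vec_eq_iff using DERIV_unique by blast

lemma mat_has_derivative_const_on_open:
  assumes "mat_has_derivative M D x" "open G" "x \<in> G" "\<And>y. y \<in> G \<Longrightarrow> M y = C"
  shows "D = 0"
proof -
  have "mat_has_derivative M 0 x"
    by (rule mat_has_derivative_transform_open[OF _ assms(2-4)]) (simp add: mat_has_derivative_def)
  thus ?thesis using mat_has_derivative_unique assms(1) by blast
qed

lemma mat_has_derivativeI_differentiable:
  assumes "\<And>i j. (\<lambda>y. M y $ i $ j) differentiable (at x)"
  shows "\<exists>D. mat_has_derivative M D x"
  using assms DERIV_deriv_iff_real_differentiable
  by (intro exI[of _ "\<chi> i j. deriv (\<lambda>y. M y $ i $ j) x"]) (simp add: mat_has_derivative_def)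

lemma orthonormal_frame_derivative_skew:
  assumes G: "open G" "x \<in> G" and orth: "\<And>y. y \<in> G \<Longrightarrow> transpose (T y) ** T y = mat 1"
    and dT: "mat_has_derivative T T' x"
  shows "transpose (transpose (T x) ** T') = - (transpose (T x) ** T')"
proof -
  have "mat_has_derivative (\<lambda>y. transpose (T y) ** T y) (transpose T' ** T x + transpose (T x) ** T') x"
    by (intro mat_has_derivative_mult mat_has_derivative_transpose dT)
  hence "transpose T' ** T x + transpose (T x) ** T' = 0"
    by (rule mat_has_derivative_const_on_open[OF _ G]) (rule orth)
  thus ?thesis by (simp add: matrix_transpose_mul eq_neg_iff_add_eq_0)
qed

text \<open>Differentiating S T = T diag(l) for an orthonormal eigenframe T of a symmetric matrix S:
  off the diagonal, the connection matrix K = transpose T ** T' is determined by S' and the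
  spectral gaps.\<close>
lemma eigenframe_derivative_offdiag:
  fixes S T :: "real \<Rightarrow> real^'n^'n" and l :: "'n \<Rightarrow> real \<Rightarrow> real"
  assumes G: "open G" "x \<in> G"
    and eig: "\<And>y i j. y \<in> G \<Longrightarrow> (S y ** T y) $ i $ j = l j y * T y $ i $ j"
    and orth: "transpose (T x) ** T x = mat 1" and sym: "transpose (S x) = S x"
    and dS: "mat_has_derivative S S' x" and dT: "mat_has_derivative T T' x"
    and dl: "\<And>j. (l j has_real_derivative l' j) (at x)"
    and kj: "k \<noteq> j"
  shows "(l j x - l k x) * (transpose (T x) ** T') $ k $ j = (transpose (T x) ** S' ** T x) $ k $ j"
proof -
  define K where "K = transpose (T x) ** T'"
  have dE: "(S' ** T x + S x ** T') $ i $ j = l' j * T x $ i $ j + l j x * T' $ i $ j" for i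
  proof -
    have "((\<lambda>y. (S y ** T y) $ i $ j) has_real_derivative (S' ** T x + S x ** T') $ i $ j) (at x)"
      using mat_has_derivative_mult[OF dS dT] unfolding mat_has_derivative_def by blast
    moreover have "((\<lambda>y. T y $ i $ j) has_real_derivative T' $ i $ j) (at x)"
      using dT by (simp add: mat_has_derivative_def)
    hence "((\<lambda>y. l j y * T y $ i $ j) has_real_derivative l' j * T x $ i $ j + l j x * T' $ i $ j) (at x)"
      using dl by (auto intro!: derivative_eq_intros)
    hence "((\<lambda>y. (S y ** T y) $ i $ j) has_real_derivative l' j * T x $ i $ j + l j x * T' $ i $ j) (at x)"
      by (rule has_field_derivative_transform_within_open[OF _ G]) (simp add: eig)
    ultimately show ?thesis using DERIV_unique by blast
  qed
  have left_eig: "(transpose (T x) ** S x) $ k $ i = l k x * T x $ i $ k" for i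
  proof -
    have "transpose (T x) ** S x = transpose (S x ** T x)" by (simp add: matrix_transpose_mul sym)
    thus ?thesis by (simp add: transpose_def eig[OF G(2)])
  qed
  have "(transpose (T x) ** S x ** T') $ k $ j = (\<Sum>i\<in>UNIV. l k x * T x $ i $ k * T' $ i $ j)"
    by (simp only: matrix_mult_entry[of "transpose (T x) ** S x"] left_eig)
  also have "\<dots> = l k x * K $ k $ j"
    by (simp add: K_def matrix_mult_entry transpose_def sum_distrib_left mult.assoc)
  finally have "(transpose (T x) ** (S' ** T x + S x ** T')) $ k $ j
      = (transpose (T x) ** S' ** T x) $ k $ j + l k x * K $ k $ j"
    by (simp add: matrix_add_ldistrib matrix_mul_assoc)
  also have "(transpose (T x) ** (S' ** T x + S x ** T')) $ k $ j
      = (\<Sum>i\<in>UNIV. T x $ i $ k * (l' j * T x $ i $ j + l j x * T' $ i $ j))"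
    by (simp only: matrix_mult_entry[of "transpose (T x)"] dE) (simp add: transpose_def)
  also have "\<dots> = l' j * (transpose (T x) ** T x) $ k $ j + l j x * K $ k $ j"
    by (simp add: K_def matrix_mult_entry transpose_def distrib_left sum.distrib sum_distrib_left
        mult.left_commute)
  finally show ?thesis
    using orth kj by (simp add: K_def algebra_simps mat_def)
qed

lemma differentiable_normalized_component:
  fixes v :: "real \<Rightarrow> real^'n"
  assumes "\<And>i. (\<lambda>y. v y $ i) differentiable (at x)" "v x \<noteq> 0"
  shows "(\<lambda>y. v y $ m / norm (v y)) differentiable (at x)"
proof -
  have norm: "norm (v y) = sqrt (\<Sum>i\<in>UNIV. (v y $ i)^2)" for y
    by (simp add: norm_vec_def L2_set_def)
  have "0 < sqrt (\<Sum>i\<in>UNIV. (v x $ i)^2)"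
    using assms(2) norm[of x] by (metis zero_less_norm_iff)
  hence "0 < (\<Sum>i\<in>UNIV. (v x $ i)^2)" by simp
  moreover obtain v' where v': "\<And>i. ((\<lambda>y. v y $ i) has_real_derivative v' i) (at x)"
    using assms(1) unfolding real_differentiable_def by metis
  ultimately show ?thesis
    unfolding norm real_differentiable_def by (intro exI) (auto intro!: derivative_eq_intros v')
qed

lemma orthogonal_eigenvectors_symmetric:
  fixes M :: "real^'n^'n"
  assumes "transpose M = M" "M *v u = l *\<^sub>R u" "M *v w = m *\<^sub>R w" "l \<noteq> m"
  shows "u \<bullet> w = 0"
proof -
  have "(M *v u) \<bullet> w = u \<bullet> (M *v w)"
    by (metis assms(1) dot_lmul_matrix transpose_matrix_vector)
  hence "l * (u \<bullet> w) = m * (u \<bullet> w)" using assms(2,3) by simp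
  thus ?thesis using assms(4) by simp
qed

lemma matrix_inv_orthogonal:
  fixes Q :: "real^'n^'n"
  assumes "orthogonal_matrix Q"
  shows "matrix_inv Q = transpose Q"
proof -
  have "Q ** matrix_inv Q = mat 1 \<and> matrix_inv Q ** Q = mat 1"
    unfolding matrix_inv_def by (rule someI[of _ "transpose Q"]) (use assms in \<open>simp add: orthogonal_matrix_def\<close>)
  hence "matrix_inv Q ** Q ** transpose Q = transpose Q" by simp
  thus ?thesis using assms by (simp add: orthogonal_matrix_def flip: matrix_mul_assoc)
qed

section \<open>Taylor estimates and Glaeser inequalities\<close>

lemma taylor2_remainder_bound:
  fixes g dg ddg :: "real \<Rightarrow> real"
  assumes D: "\<And>t. t \<in> {a..b} \<Longrightarrow>
      (g has_real_derivative dg t) (at t) \<and> (dg has_real_derivative ddg t) (at t) \<and> \<bar>ddg t\<bar> \<le> M"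
    and xy: "x \<in> {a..b}" "y \<in> {a..b}"
  shows "\<bar>g y - g x - (y - x) * dg x\<bar> \<le> M * (y - x)^2 / 2"
proof (cases "y = x")
  case False
  define diff where "diff = (\<lambda>m::nat. if m = 0 then g else if m = 1 then dg else ddg)"
  have "\<forall>m t. m < 2 \<and> a \<le> t \<and> t \<le> b \<longrightarrow> DERIV (diff m) t :> diff (Suc m) t"
    using D by (auto simp: diff_def less_2_cases_iff)
  then obtain t where t1: "if y < x then y < t \<and> t < x else x < t \<and> t < y"
    and t2: "g y = (\<Sum>m<2. diff m x / fact m * (y - x)^m) + diff 2 t / fact 2 * (y - x)^2"
    using Taylor[of 2 diff g a b x y] xy False by (auto simp: diff_def)
  have t: "t \<in> {a..b}" "g y = g x + dg x * (y - x) + ddg t / 2 * (y - x)^2"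
    using t1 t2 xy by (auto simp: diff_def numeral_2_eq_2 split: if_splits)
  have "\<bar>g y - g x - (y - x) * dg x\<bar> = \<bar>ddg t\<bar> * (y - x)^2 / 2"
    by (simp add: t(2) abs_mult)
  also have "\<dots> \<le> M * (y - x)^2 / 2"
    using D[OF t(1)] by (intro divide_right_mono mult_right_mono) auto
  finally show ?thesis .
qed (use D xy in \<open>auto dest: order_trans[OF abs_ge_zero]\<close>)

lemma taylor3_remainder_bound:
  fixes g dg ddg dddg :: "real \<Rightarrow> real"
  assumes D: "\<And>t. t \<in> {a..b} \<Longrightarrow> (g has_real_derivative dg t) (at t) \<and>
      (dg has_real_derivative ddg t) (at t) \<and> (ddg has_real_derivative dddg t) (at t) \<and> \<bar>dddg t\<bar> \<le> M"
    and xy: "x \<in> {a..b}" "y \<in> {a..b}"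
  shows "\<bar>g y - g x - (y - x) * dg x - (y - x)^2 / 2 * ddg x\<bar> \<le> M * \<bar>y - x\<bar>^3 / 6"
proof (cases "y = x")
  case False
  define diff where "diff = (\<lambda>m::nat. if m = 0 then g else if m = 1 then dg else if m = 2 then ddg else dddg)"
  have "\<forall>m t. m < 3 \<and> a \<le> t \<and> t \<le> b \<longrightarrow> DERIV (diff m) t :> diff (Suc m) t"
    using D by (auto simp: diff_def numeral_3_eq_3 less_Suc_eq)
  then obtain t where t1: "if y < x then y < t \<and> t < x else x < t \<and> t < y"
    and t2: "g y = (\<Sum>m<3. diff m x / fact m * (y - x)^m) + diff 3 t / fact 3 * (y - x)^3"
    using Taylor[of 3 diff g a b x y] xy False by (auto simp: diff_def)
  have t: "t \<in> {a..b}" "g y = g x + dg x * (y - x) + ddg x / 2 * (y - x)^2 + dddg t / 6 * (y - x)^3"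
    using t1 t2 xy by (auto simp: diff_def numeral_3_eq_3 numeral_2_eq_2 fact_numeral split: if_splits)
  have "\<bar>g y - g x - (y - x) * dg x - (y - x)^2 / 2 * ddg x\<bar> = \<bar>dddg t\<bar> * \<bar>y - x\<bar>^3 / 6"
    by (simp add: t(2) abs_mult power_abs algebra_simps)
  also have "\<dots> \<le> M * \<bar>y - x\<bar>^3 / 6"
    using D[OF t(1)] by (intro divide_right_mono mult_right_mono) auto
  finally show ?thesis .
qed (use D xy in \<open>auto dest: order_trans[OF abs_ge_zero]\<close>)

text \<open>Glaeser-type inequality: a non-negative function with bounded second derivative has
  first derivative O(\<surd>g).\<close>
lemma glaeser_nonneg:
  fixes g dg ddg :: "real \<Rightarrow> real"
  assumes h: "0 < h" and gx: "g x = h^2" and nonneg: "0 \<le> g (x - h)" "0 \<le> g (x + h)"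
    and D: "\<And>t. t \<in> {x-h..x+h} \<Longrightarrow>
      (g has_real_derivative dg t) (at t) \<and> (dg has_real_derivative ddg t) (at t) \<and> \<bar>ddg t\<bar> \<le> M"
  shows "\<bar>dg x\<bar> \<le> (1 + M/2) * h" "g (x - h) \<le> (2 + M) * h^2" "g (x + h) \<le> (2 + M) * h^2"
proof -
  have T: "\<bar>g y - g x - (y - x) * dg x\<bar> \<le> M * (y - x)^2 / 2" if "y \<in> {x - h, x + h}" for y
    by (rule taylor2_remainder_bound[where a = "x - h" and b = "x + h"]) (use D that h in auto)
  have p: "\<bar>g (x + h) - h^2 - h * dg x\<bar> \<le> M*h^2/2" and m: "\<bar>g (x - h) - h^2 + h * dg x\<bar> \<le> M*h^2/2"
    using T[of "x + h"] T[of "x - h"] gx by simp_all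
  have hg: "\<bar>h * dg x\<bar> \<le> h^2 + M*h^2/2"
    using p m nonneg unfolding abs_le_iff by linarith
  hence "h * \<bar>dg x\<bar> \<le> h * ((1 + M/2) * h)"
    using h by (simp add: abs_mult algebra_simps power2_eq_square)
  thus "\<bar>dg x\<bar> \<le> (1 + M/2) * h" using h by simp
  have "(2 + M) * h^2 = 2 * h^2 + M * h^2" by (simp add: algebra_simps)
  thus "g (x - h) \<le> (2 + M) * h^2" "g (x + h) \<le> (2 + M) * h^2"
    using p m hg unfolding abs_le_iff by linarith+
qed

text \<open>The same for the constant term f of a hyperbolic cubic whose linear coefficient g
  is O(h^2): the discriminant condition makes f = O(h^3), so f' = O(h^2).\<close>
lemma glaeser_discriminant:
  fixes f df ddf dddf g :: "real \<Rightarrow> real"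
  assumes h: "0 < h" and K: "1 \<le> K"
    and D: "\<And>t. t \<in> {x-h..x+h} \<Longrightarrow> (f has_real_derivative df t) (at t) \<and>
      (df has_real_derivative ddf t) (at t) \<and> (ddf has_real_derivative dddf t) (at t) \<and> \<bar>dddf t\<bar> \<le> M"
    and disc: "\<And>y. y \<in> {x - h, x + h} \<Longrightarrow> 27 * (f y)^2 \<le> 4 * (g y)^3 \<and> 0 \<le> g y \<and> g y \<le> K * h^2"
  shows "\<bar>df x\<bar> \<le> (K^2 + M/6) * h^2"
proof -
  have fb: "\<bar>f y\<bar> \<le> K^2 * h^3" if "y \<in> {x - h, x + h}" for y
  proof -
    have "(g y)^3 \<le> (K * h^2)^3" using disc[OF that] by (intro power_mono) auto
    also have "\<dots> = K^3 * h^6" by (simp add: power_mult_distrib power_mult[symmetric])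
    also have "\<dots> \<le> K^4 * h^6" using K by (intro mult_right_mono power_increasing) auto
    finally have "(g y)^3 \<le> K^4 * h^6" .
    moreover have "0 \<le> K^4 * h^6" "(K^2 * h^3)^2 = K^4 * h^6"
      using K by (simp_all add: power_mult_distrib power_mult[symmetric])
    ultimately have "(f y)^2 \<le> (K^2 * h^3)^2"
      using disc[OF that] by linarith
    thus ?thesis using h K by (simp add: abs_le_square_iff[symmetric])
  qed
  have T: "\<bar>f y - f x - (y - x) * df x - (y - x)^2 / 2 * ddf x\<bar> \<le> M * \<bar>y - x\<bar>^3 / 6"
    if "y \<in> {x - h, x + h}" for y
    by (rule taylor3_remainder_bound[where a = "x - h" and b = "x + h"]) (use D that h in auto)
  have "\<bar>f (x + h) - f x - h * df x - h^2 / 2 * ddf x\<bar> \<le> M * h^3 / 6"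
    "\<bar>f (x - h) - f x + h * df x - h^2 / 2 * ddf x\<bar> \<le> M * h^3 / 6"
    using T[of "x + h"] T[of "x - h"] h by simp_all
  hence "\<bar>2 * h * df x\<bar> \<le> 2 * K^2 * h^3 + M * h^3 / 3"
    using fb[of "x - h"] fb[of "x + h"] unfolding abs_le_iff by auto
  hence "h * (2 * \<bar>df x\<bar>) \<le> h * (2 * ((K^2 + M/6) * h^2))"
    using h by (simp add: abs_mult algebra_simps power2_eq_square power3_eq_cube)
  thus ?thesis using h by simp
qed

lemma glaeser_hyperbolic_pair:
  fixes f df ddf dddf g dg ddg :: "real \<Rightarrow> real"
  assumes gx: "0 < g x" and M: "0 \<le> M"
    and Dg: "\<And>t. t \<in> {x - sqrt (g x)..x + sqrt (g x)} \<Longrightarrow>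
      (g has_real_derivative dg t) (at t) \<and> (dg has_real_derivative ddg t) (at t) \<and> \<bar>ddg t\<bar> \<le> M"
    and Df: "\<And>t. t \<in> {x - sqrt (g x)..x + sqrt (g x)} \<Longrightarrow> (f has_real_derivative df t) (at t) \<and>
      (df has_real_derivative ddf t) (at t) \<and> (ddf has_real_derivative dddf t) (at t) \<and> \<bar>dddf t\<bar> \<le> M"
    and ends: "\<And>y. y \<in> {x - sqrt (g x), x + sqrt (g x)} \<Longrightarrow> 0 \<le> g y \<and> 27 * (f y)^2 \<le> 4 * (g y)^3"
  shows "\<bar>dg x\<bar> \<le> (1 + M/2) * sqrt (g x)" "\<bar>df x\<bar> \<le> ((2 + M)^2 + M/6) * g x"
proof -
  define h where "h = sqrt (g x)"
  have h: "0 < h" "g x = h^2" using gx by (simp_all add: h_def)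
  have e: "0 \<le> g (x - h)" "0 \<le> g (x + h)" using ends by (simp_all add: h_def)
  note GA = glaeser_nonneg[OF h e Dg[folded h_def]]
  show "\<bar>dg x\<bar> \<le> (1 + M/2) * sqrt (g x)" using GA(1) by (simp add: h_def)
  have "\<bar>df x\<bar> \<le> ((2 + M)^2 + M/6) * h^2"
    by (rule glaeser_discriminant[where g = g, OF h(1) _ Df[folded h_def]])
      (use M GA(2,3) ends in \<open>auto simp: h_def\<close>)
  thus "\<bar>df x\<bar> \<le> ((2 + M)^2 + M/6) * g x" using h(2) by simp
qed

section \<open>The spectrum of S\<close>

definition S_charpoly :: "real \<Rightarrow> real \<Rightarrow> real \<Rightarrow> real" where
  "S_charpoly a b l = l^3 - (3+2*a+a^2)*l^2 + (6*a+2*a^2+2*a^3-9*b^2)*l - (4*a^3-27*b^2)"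

definition S_eigval :: "real \<Rightarrow> real \<Rightarrow> 3 \<Rightarrow> real" where
  "S_eigval a b j = eig (Smat a b) (if j = 1 then 1 else if j = 2 then 2 else 3)"

lemma Smat_mult_vector:
  "Smat a b *v v = vector [3 * v$1 - a * v$3, 2*a * v$2 + 3*b * v$3, -a * v$1 + 3*b * v$2 + a^2 * v$3]"
  unfolding Smat_def by (simp add: vec_eq_iff matrix_vector_mult_def sum_3 forall_3)

lemma transpose_Smat [simp]: "transpose (Smat a b) = Smat a b"
  unfolding Smat_def by (simp add: transpose_def vec_eq_iff forall_3)

lemma S_charpoly_eq_0_if_eigenvector:
  assumes "Smat a b *v v = l *\<^sub>R v" "v \<noteq> 0"
  shows "S_charpoly a b l = 0"
proof -
  have e1: "3 * v$1 - a * v$3 = l * v$1" and e2: "2*a * v$2 + 3*b * v$3 = l * v$2"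
    and e3: "-a * v$1 + 3*b * v$2 + a^2 * v$3 = l * v$3"
    using assms(1) by (simp_all add: Smat_mult_vector vec_eq_iff forall_3)
  have "S_charpoly a b l * v$1 = 0" "S_charpoly a b l * v$2 = 0" "S_charpoly a b l * v$3 = 0"
    using e1 e2 e3 unfolding S_charpoly_def by algebra+
  moreover have "v$1 \<noteq> 0 \<or> v$2 \<noteq> 0 \<or> v$3 \<noteq> 0"
    using assms(2) by (auto simp: vec_eq_iff forall_3)
  ultimately show ?thesis by auto
qed

lemma ell_eigenvectors:
  assumes "S_charpoly a b l = 0"
  shows "Smat a b *v ell1 a b l = l *\<^sub>R ell1 a b l"
    and "Smat a b *v ell2 a b l = l *\<^sub>R ell2 a b l"
    and "Smat a b *v ell3 a b l = l *\<^sub>R ell3 a b l"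
  using assms
  by (simp_all add: Smat_mult_vector vec_eq_iff forall_3 ell1_def ell2_def ell3_def S_charpoly_def
      algebra_simps power2_eq_square power3_eq_cube)

lemma cubic_vieta:
  fixes r1 r2 r3 c2 c1 c0 :: real
  assumes distinct: "r1 \<noteq> r2" "r1 \<noteq> r3" "r2 \<noteq> r3"
    and roots: "\<And>r. r \<in> {r1,r2,r3} \<Longrightarrow> r^3 + c2*r^2 + c1*r + c0 = 0"
  shows "c2 = -(r1+r2+r3)" "c1 = r1*r2+r1*r3+r2*r3" "c0 = -(r1*r2*r3)"
proof -
  have h1: "r1^3 + c2*r1^2 + c1*r1 + c0 = 0" and h2: "r2^3 + c2*r2^2 + c1*r2 + c0 = 0"
    and h3: "r3^3 + c2*r3^2 + c1*r3 + c0 = 0" using roots by auto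
  have "(r1-r2)*(r1^2+r1*r2+r2^2 + c2*(r1+r2) + c1) = 0" using h1 h2 by algebra
  hence q12: "r1^2+r1*r2+r2^2 + c2*(r1+r2) + c1 = 0" using distinct by simp
  have "(r1-r3)*(r1^2+r1*r3+r3^2 + c2*(r1+r3) + c1) = 0" using h1 h3 by algebra
  hence q13: "r1^2+r1*r3+r3^2 + c2*(r1+r3) + c1 = 0" using distinct by simp
  have "(r2-r3)*(r1+r2+r3+c2) = 0" using q12 q13 by algebra
  thus c2: "c2 = -(r1+r2+r3)" using distinct by simp
  show c1: "c1 = r1*r2+r1*r3+r2*r3" using q12 c2 by algebra
  show "c0 = -(r1*r2*r3)" using h1 c1 c2 by algebra
qed

text \<open>The bound 1/100 is an arbitrary threshold that keeps the three eigenvalues of S apart.\<close>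
definition small_hyperbolic :: "real \<Rightarrow> real \<Rightarrow> bool" where
  "small_hyperbolic a b \<longleftrightarrow> 0 < a \<and> a \<le> 1/100 \<and> 27*b^2 \<le> 4*a^3"

lemma small_hyperbolicD:
  assumes "small_hyperbolic a b"
  shows "0 < a" "a \<le> 1/100" "27*b^2 \<le> 4*a^3" "a^2 \<le> a/100" "a^3 \<le> a^2/100"
  using assms mult_right_mono[of a "1/100" a] mult_right_mono[of a "1/100" "a^2"]
  by (auto simp: small_hyperbolic_def power2_eq_square power3_eq_cube)

lemma small_hyperbolic_sqrt:
  assumes "small_hyperbolic a b" shows "0 < sqrt a" "sqrt a \<le> 1"
  using small_hyperbolicD(1,2)[OF assms] by simp_all

lemma S_charpoly_signs:
  assumes "small_hyperbolic a b"
  shows "S_charpoly a b 0 \<le> 0" "S_charpoly a b (a/2) > 0" "S_charpoly a b (3*a/2) > 0"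
    "S_charpoly a b (5*a/2) < 0" "S_charpoly a b (5/2) < 0" "S_charpoly a b (7/2) > 0"
proof -
  note a = small_hyperbolicD[OF assms]
  have b0: "b^2 \<ge> 0" by simp
  have ab: "a*b^2 \<le> 1/100*b^2" using a b0 by (intro mult_right_mono) auto
  have a4: "a^4 \<le> a^3/100" using a(1,5) by (simp add: power_numeral_reduce mult_left_mono)
  have apos: "a^2 > 0" "a^3 > 0" "a^4 > 0" using a by simp_all
  show "S_charpoly a b 0 \<le> 0" using a by (simp add: S_charpoly_def)
  have "S_charpoly a b (a/2) = 27*b^2 - 9/2*a*b^2 + 9/4*a^2 - 27/8*a^3 + 3/4*a^4"
    unfolding S_charpoly_def by (simp add: field_simps power2_eq_square power3_eq_cube power_numeral_reduce)
  thus "S_charpoly a b (a/2) > 0" using ab a a4 apos b0 by linarith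
  have "S_charpoly a b (3*a/2) = 27*b^2 - 27/2*a*b^2 + 9/4*a^2 - 17/8*a^3 + 3/4*a^4"
    unfolding S_charpoly_def by (simp add: field_simps power2_eq_square power3_eq_cube power_numeral_reduce)
  thus "S_charpoly a b (3*a/2) > 0" using ab a a4 apos b0 by linarith
  have "S_charpoly a b (5*a/2) = 27*b^2 - 45/2*a*b^2 - 15/4*a^2 + 33/8*a^3 - 5/4*a^4"
    unfolding S_charpoly_def by (simp add: field_simps power2_eq_square power3_eq_cube power_numeral_reduce)
  moreover have "a*b^2 \<ge> 0" using a by simp
  ultimately show "S_charpoly a b (5*a/2) < 0" using a a4 apos by linarith
  have "S_charpoly a b (5/2) = -25/8 + 9/2*b^2 + 5/2*a - 5/4*a^2 + a^3"
    unfolding S_charpoly_def by (simp add: field_simps power2_eq_square power3_eq_cube power_numeral_reduce)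
  thus "S_charpoly a b (5/2) < 0" using a apos by linarith
  have "S_charpoly a b (7/2) = 49/8 - 9/2*b^2 - 7/2*a - 21/4*a^2 + 3*a^3"
    unfolding S_charpoly_def by (simp add: field_simps power2_eq_square power3_eq_cube power_numeral_reduce)
  thus "S_charpoly a b (7/2) > 0" using a apos by linarith
qed

lemma continuous_on_S_charpoly: "continuous_on X (S_charpoly a b)"
  unfolding S_charpoly_def by (intro continuous_intros)

lemma S_charpoly_root_between:
  assumes "u \<le> v" "S_charpoly a b u * S_charpoly a b v \<le> 0"
  obtains r where "u \<le> r" "r \<le> v" "S_charpoly a b r = 0"
proof (cases "S_charpoly a b u \<le> 0")
  case True
  hence "S_charpoly a b v \<ge> 0 \<or> S_charpoly a b u = 0"
    using assms(2) by (auto simp: mult_le_0_iff)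
  thus ?thesis
    using IVT'[of "S_charpoly a b" u 0 v] assms(1) True continuous_on_S_charpoly that by fastforce
next
  case False
  hence "S_charpoly a b v \<le> 0" using assms(2) by (auto simp: mult_le_0_iff)
  thus ?thesis
    using IVT2'[of "S_charpoly a b" v 0 u] assms(1) False continuous_on_S_charpoly that by fastforce
qed

lemma sorted_list_of_set_3:
  "(r1::real) < r2 \<Longrightarrow> r2 < r3 \<Longrightarrow> sorted_list_of_set {r1,r2,r3} = [r1,r2,r3]"
  by (simp add: sorted_list_of_set_insert)

lemma norm_ell_lower_bounds:
  assumes "small_hyperbolic a b"
  shows "0 \<le> l \<Longrightarrow> l \<le> a/2 \<Longrightarrow> 3*a \<le> norm (ell1 a b l)"
    and "3*a/2 \<le> l \<Longrightarrow> l \<le> 5*a/2 \<Longrightarrow> 2*a \<le> norm (ell2 a b l)"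
    and "5/2 \<le> l \<Longrightarrow> l \<le> 7/2 \<Longrightarrow> 3 \<le> norm (ell3 a b l)"
proof -
  note a = small_hyperbolicD[OF assms]
  show "3*a \<le> norm (ell1 a b l)" if "0 \<le> l" "l \<le> a/2"
  proof -
    have "2*(3/2*a) \<le> (3 - l)*(2*a - l)" by (rule mult_mono) (use that a in auto)
    hence "3*a \<le> \<bar>ell1 a b l $ 3\<bar>" by (simp add: ell1_def algebra_simps)
    thus ?thesis using component_le_norm_cart[of "ell1 a b l" 3] by linarith
  qed
  show "2*a \<le> norm (ell2 a b l)" if "3*a/2 \<le> l" "l \<le> 5*a/2"
  proof -
    have "2*a \<le> (3 - l)*(l - a^2)" by (rule mult_mono) (use that a in auto)
    moreover have "ell2 a b l $ 2 = -((3 - l)*(l - a^2) + a^2)" by (simp add: ell2_def algebra_simps)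
    ultimately have "2*a \<le> \<bar>ell2 a b l $ 2\<bar>" by (smt (verit) zero_le_power2)
    thus ?thesis using component_le_norm_cart[of "ell2 a b l" 2] by linarith
  qed
  show "3 \<le> norm (ell3 a b l)" if "5/2 \<le> l" "l \<le> 7/2"
  proof -
    have "2*2 \<le> (l - 2*a)*(l - a^2)" by (rule mult_mono) (use that a in auto)
    hence "3 \<le> \<bar>ell3 a b l $ 1\<bar>" using a by (simp add: ell3_def)
    thus ?thesis using component_le_norm_cart[of "ell3 a b l" 1] by linarith
  qed
qed

lemma S_eigenvalues:
  assumes "small_hyperbolic a b"
  shows "eigvals (Smat a b) = {S_eigval a b 1, S_eigval a b 2, S_eigval a b 3}"
    and "0 \<le> S_eigval a b 1" "S_eigval a b 1 \<le> a/2" "3*a/2 \<le> S_eigval a b 2" "S_eigval a b 2 \<le> 5*a/2"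
      "5/2 \<le> S_eigval a b 3" "S_eigval a b 3 \<le> 7/2"
    and "\<And>m. S_charpoly a b m = (m - S_eigval a b 1) * (m - S_eigval a b 2) * (m - S_eigval a b 3)"
proof -
  note a = small_hyperbolicD[OF assms]
  note s = S_charpoly_signs[OF assms]
  obtain r1 where r1: "0 \<le> r1" "r1 \<le> a/2" "S_charpoly a b r1 = 0"
    by (rule S_charpoly_root_between[of 0 "a/2"]) (use s a in \<open>auto simp: mult_nonpos_nonneg\<close>)
  obtain r2 where r2: "3*a/2 \<le> r2" "r2 \<le> 5*a/2" "S_charpoly a b r2 = 0"
    by (rule S_charpoly_root_between[of "3*a/2" "5*a/2"]) (use s a in \<open>auto intro!: less_imp_le mult_pos_neg\<close>)
  obtain r3 where r3: "5/2 \<le> r3" "r3 \<le> 7/2" "S_charpoly a b r3 = 0"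
    by (rule S_charpoly_root_between[of "5/2" "7/2"]) (use s a in \<open>auto intro!: less_imp_le mult_neg_pos\<close>)
  have lt: "r1 < r2" "r2 < r3" using r1 r2 r3 a by linarith+
  have expand: "S_charpoly a b m = m^3 + (-(3+2*a+a^2))*m^2 + (6*a+2*a^2+2*a^3-9*b^2)*m + (-(4*a^3-27*b^2))" for m
    by (simp add: S_charpoly_def algebra_simps)
  have "-(3+2*a+a^2) = -(r1+r2+r3)" "6*a+2*a^2+2*a^3-9*b^2 = r1*r2+r1*r3+r2*r3"
    "-(4*a^3-27*b^2) = -(r1*r2*r3)"
    by (rule cubic_vieta; use lt r1 r2 r3 expand in force)+
  hence factor: "S_charpoly a b m = (m-r1)*(m-r2)*(m-r3)" for m
    unfolding expand by algebra
  have E: "eigvals (Smat a b) = {r1,r2,r3}"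
  proof
    show "eigvals (Smat a b) \<subseteq> {r1,r2,r3}"
      using S_charpoly_eq_0_if_eigenvector factor by (fastforce simp: eigvals_def)
    have "ell1 a b r1 \<noteq> 0" "ell2 a b r2 \<noteq> 0" "ell3 a b r3 \<noteq> 0"
      using norm_ell_lower_bounds[OF assms] r1 r2 r3 a(1) by fastforce+
    thus "{r1,r2,r3} \<subseteq> eigvals (Smat a b)"
      using ell_eigenvectors[OF r1(3)] ell_eigenvectors[OF r2(3)] ell_eigenvectors[OF r3(3)]
      unfolding eigvals_def by blast
  qed
  have L: "S_eigval a b 1 = r1" "S_eigval a b 2 = r2" "S_eigval a b 3 = r3"
    unfolding S_eigval_def eig_def E sorted_list_of_set_3[OF lt] by simp_all
  show "eigvals (Smat a b) = {S_eigval a b 1, S_eigval a b 2, S_eigval a b 3}"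
    "0 \<le> S_eigval a b 1" "S_eigval a b 1 \<le> a/2" "3*a/2 \<le> S_eigval a b 2" "S_eigval a b 2 \<le> 5*a/2"
    "5/2 \<le> S_eigval a b 3" "S_eigval a b 3 \<le> 7/2"
    "\<And>m. S_charpoly a b m = (m - S_eigval a b 1) * (m - S_eigval a b 2) * (m - S_eigval a b 3)"
    unfolding L using E r1 r2 r3 factor by auto
qed

lemma S_eigval_gaps:
  assumes "small_hyperbolic a b"
  shows "a \<le> S_eigval a b 2 - S_eigval a b 1" "2 \<le> S_eigval a b 3 - S_eigval a b 1"
    "2 \<le> S_eigval a b 3 - S_eigval a b 2"
  using S_eigenvalues(2-7)[OF assms] small_hyperbolicD[OF assms] by linarith+

lemma S_eigval_distinct:
  assumes "small_hyperbolic a b" "i \<noteq> j"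
  shows "S_eigval a b i \<noteq> S_eigval a b j"
  using S_eigval_gaps[OF assms(1)] small_hyperbolicD(1)[OF assms(1)] assms(2)
    exhaust_3[of i] exhaust_3[of j] by auto

lemma card_eigvals_Smat:
  assumes "small_hyperbolic a b" shows "card (eigvals (Smat a b)) = 3"
proof -
  have "S_eigval a b 1 \<noteq> S_eigval a b 2" "S_eigval a b 1 \<noteq> S_eigval a b 3"
    "S_eigval a b 2 \<noteq> S_eigval a b 3"
    by (rule S_eigval_distinct[OF assms]; simp)+
  thus ?thesis unfolding S_eigenvalues(1)[OF assms] by simp
qed

lemma S_eigval_eq_roots:
  assumes "small_hyperbolic a b" "r1 < r2" "r2 < r3"
    and "S_charpoly a b r1 = 0" "S_charpoly a b r2 = 0" "S_charpoly a b r3 = 0"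
  shows "S_eigval a b 1 = r1" "S_eigval a b 2 = r2" "S_eigval a b 3 = r3"
proof -
  define l where "l = S_eigval a b"
  note E = S_eigenvalues[OF assms(1), folded l_def]
  have "l 1 < l 2" "l 2 < l 3" using E(2-7) small_hyperbolicD(1,2)[OF assms(1)] by linarith+
  have "{r1,r2,r3} \<subseteq> {l 1, l 2, l 3}" using assms(4-6) E(8) by auto
  moreover have "card {r1,r2,r3} = 3" using assms(2,3) by auto
  moreover have "card {l 1, l 2, l 3} \<le> 3" by (simp add: card_insert_le_m1)
  ultimately have "{l 1, l 2, l 3} = {r1,r2,r3}" by (metis card_seteq finite.emptyI finite_insert)
  hence "sorted_list_of_set (eigvals (Smat a b)) = [r1,r2,r3]"
    using E(1) sorted_list_of_set_3 assms(2,3) by simp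
  thus "S_eigval a b 1 = r1" "S_eigval a b 2 = r2" "S_eigval a b 3 = r3"
    by (simp_all add: S_eigval_def eig_def)
qed

lemma cubic_sign_changes:
  fixes l1 l2 l3 d :: real
  assumes "0 < d" "2*d < l2 - l1" "2*d < l3 - l2"
  defines "p \<equiv> \<lambda>m. (m - l1) * (m - l2) * (m - l3)"
  shows "p (l1 - d) < 0" "0 < p (l1 + d)" "0 < p (l2 - d)" "p (l2 + d) < 0"
    "p (l3 - d) < 0" "0 < p (l3 + d)"
proof -
  have pos: "0 < d * (l2 - l1 + d) * (l3 - l1 + d)" "0 < d * (l2 - l1 - d) * (l3 - l1 - d)"
    "0 < (l2 - l1 - d) * d * (l3 - l2 + d)" "0 < (l2 - l1 + d) * d * (l3 - l2 - d)"
    "0 < (l3 - l1 - d) * (l3 - l2 - d) * d" "0 < (l3 - l1 + d) * (l3 - l2 + d) * d"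
    using assms(1-3) by (intro mult_pos_pos; linarith)+
  show "p (l1 - d) < 0" "0 < p (l1 + d)" "0 < p (l2 - d)" "p (l2 + d) < 0"
    "p (l3 - d) < 0" "0 < p (l3 + d)"
    using pos unfolding p_def by (simp_all add: algebra_simps)
qed

lemma S_eigval_close_if_sign_changes:
  fixes l :: "3 \<Rightarrow> real"
  assumes "small_hyperbolic a b" and d: "0 < d" "2*d < l 2 - l 1" "2*d < l 3 - l 2"
    and sign: "S_charpoly a b (l 1 - d) < 0" "0 < S_charpoly a b (l 1 + d)"
      "0 < S_charpoly a b (l 2 - d)" "S_charpoly a b (l 2 + d) < 0"
      "S_charpoly a b (l 3 - d) < 0" "0 < S_charpoly a b (l 3 + d)"
  shows "\<bar>S_eigval a b j - l j\<bar> \<le> d"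
proof -
  obtain r1 where r1: "l 1 - d \<le> r1" "r1 \<le> l 1 + d" "S_charpoly a b r1 = 0"
    by (rule S_charpoly_root_between[of "l 1 - d" "l 1 + d"])
      (use sign d in \<open>auto intro!: less_imp_le mult_neg_pos\<close>)
  obtain r2 where r2: "l 2 - d \<le> r2" "r2 \<le> l 2 + d" "S_charpoly a b r2 = 0"
    by (rule S_charpoly_root_between[of "l 2 - d" "l 2 + d"])
      (use sign d in \<open>auto intro!: less_imp_le mult_pos_neg\<close>)
  obtain r3 where r3: "l 3 - d \<le> r3" "r3 \<le> l 3 + d" "S_charpoly a b r3 = 0"
    by (rule S_charpoly_root_between[of "l 3 - d" "l 3 + d"])
      (use sign d in \<open>auto intro!: less_imp_le mult_neg_pos\<close>)
  have "r1 < r2" "r2 < r3" using r1 r2 r3 d by linarith+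
  note roots = S_eigval_eq_roots[OF assms(1) this r1(3) r2(3) r3(3)]
  show ?thesis using exhaust_3[of j] roots r1 r2 r3 by auto
qed

lemma isCont_S_eigval:
  fixes A B :: "real \<Rightarrow> real"
  assumes G: "open G" "x \<in> G" "\<forall>y\<in>G. small_hyperbolic (A y) (B y)"
    and cont: "isCont A x" "isCont B x"
  shows "isCont (\<lambda>y. S_eigval (A y) (B y) j) x"
  unfolding isCont_def tendsto_iff dist_real_def
proof (intro allI impI)
  fix e :: real assume e: "e > 0"
  define l where "l = S_eigval (A x) (B x)"
  let ?p = "\<lambda>y. S_charpoly (A y) (B y)"
  have gx: "small_hyperbolic (A x) (B x)" using G by auto
  define d where "d = min (e/2) (A x / 4)"
  have d: "0 < d" "d < e" "2*d < l 2 - l 1" "2*d < l 3 - l 2"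
    using e small_hyperbolicD(1,2)[OF gx] S_eigval_gaps[OF gx, folded l_def] by (auto simp: d_def)
  have "?p x m = (m - l 1) * (m - l 2) * (m - l 3)" for m
    using S_eigenvalues(8)[OF gx] by (simp add: l_def)
  note sx = cubic_sign_changes[OF d(1,3,4), folded this]
  have "isCont (\<lambda>y. ?p y m) x" for m
    unfolding S_charpoly_def by (intro continuous_intros cont)
  hence lim: "((\<lambda>y. ?p y m) \<longlongrightarrow> ?p x m) (at x)" for m
    by (simp add: isCont_def)
  have "\<forall>\<^sub>F y in at x. y \<in> G \<and> ?p y (l 1 - d) < 0 \<and> 0 < ?p y (l 1 + d)
     \<and> 0 < ?p y (l 2 - d) \<and> ?p y (l 2 + d) < 0 \<and> ?p y (l 3 - d) < 0 \<and> 0 < ?p y (l 3 + d)"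
    using eventually_at_in_open'[OF G(1,2)]
      order_tendstoD(2)[OF lim sx(1)] order_tendstoD(1)[OF lim sx(2)]
      order_tendstoD(1)[OF lim sx(3)] order_tendstoD(2)[OF lim sx(4)]
      order_tendstoD(2)[OF lim sx(5)] order_tendstoD(1)[OF lim sx(6)]
    by eventually_elim auto
  thus "\<forall>\<^sub>F y in at x. \<bar>S_eigval (A y) (B y) j - S_eigval (A x) (B x) j\<bar> < e"
  proof (rule eventually_mono, elim conjE)
    fix y assume "y \<in> G" and sy: "?p y (l 1 - d) < 0" "0 < ?p y (l 1 + d)"
      "0 < ?p y (l 2 - d)" "?p y (l 2 + d) < 0" "?p y (l 3 - d) < 0" "0 < ?p y (l 3 + d)"
    have "\<bar>S_eigval (A y) (B y) j - l j\<bar> \<le> d"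
      using S_eigval_close_if_sign_changes[OF _ d(1,3,4) sy] G(3) \<open>y \<in> G\<close> by blast
    thus "\<bar>S_eigval (A y) (B y) j - S_eigval (A x) (B x) j\<bar> < e" using d(2) by (simp add: l_def)
  qed
qed

lemma S_charpoly_diff:
  "S_charpoly a b u - S_charpoly a b v
     = (u - v) * (u^2 + u * v + v^2 - (3+2*a+a^2)*(u+v) + (6*a+2*a^2+2*a^3-9*b^2))"
  unfolding S_charpoly_def by algebra

lemma S_charpoly_deriv_at_eigval:
  assumes "small_hyperbolic a b"
  shows "3 * (S_eigval a b j)^2 - 2*(3+2*a+a^2) * S_eigval a b j + (6*a+2*a^2+2*a^3-9*b^2) \<noteq> 0"
proof -
  define l where "l = S_eigval a b"
  define p' where "p' = (\<lambda>m::real. (m - l 2)*(m - l 3) + (m - l 1)*(m - l 3) + (m - l 1)*(m - l 2))"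
  have "((\<lambda>m. S_charpoly a b m) has_real_derivative
      3 * m^2 - 2*(3+2*a+a^2) * m + (6*a+2*a^2+2*a^3-9*b^2)) (at m)" for m
    unfolding S_charpoly_def by (auto intro!: derivative_eq_intros simp: power2_eq_square)
  moreover have "((\<lambda>m. S_charpoly a b m) has_real_derivative p' m) (at m)" for m
    unfolding S_eigenvalues(8)[OF assms] l_def[symmetric] p'_def
    by (auto intro!: derivative_eq_intros simp: algebra_simps)
  ultimately have "3 * m^2 - 2*(3+2*a+a^2) * m + (6*a+2*a^2+2*a^3-9*b^2) = p' m" for m
    using DERIV_unique by blast
  moreover have "p' (l j) \<noteq> 0"
    using S_eigval_distinct[OF assms] exhaust_3[of j] unfolding l_def p'_def by fastforce
  ultimately show ?thesis unfolding l_def by metis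
qed

text \<open>A simple root of a polynomial with differentiable coefficients is differentiable:
  the difference quotient of the root is minus that of the coefficients, divided by a
  factor tending to the (non-zero) derivative of the polynomial at the root.\<close>
lemma S_eigval_differentiable:
  fixes A B :: "real \<Rightarrow> real"
  assumes G: "open G" "x \<in> G" "\<forall>y\<in>G. small_hyperbolic (A y) (B y)"
    and dA: "(A has_real_derivative A') (at x)" and dB: "(B has_real_derivative B') (at x)"
  shows "(\<lambda>y. S_eigval (A y) (B y) j) differentiable (at x)"
proof -
  define L where "L = (\<lambda>y. S_eigval (A y) (B y) j)"
  define H where "H = (\<lambda>y. S_charpoly (A y) (B y) (L x))"
  define Q where "Q = (\<lambda>y. (L y)^2 + L y * L x + (L x)^2 - (3+2*A y+(A y)^2)*(L y + L x)
     + (6*A y+2*(A y)^2+2*(A y)^3-9*(B y)^2))"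
  have cA: "isCont A x" and cB: "isCont B x" using dA dB by (simp_all add: DERIV_isCont)
  have cL: "isCont L x" unfolding L_def by (rule isCont_S_eigval[OF G cA cB])
  have "\<exists>H'. (H has_real_derivative H') (at x)"
    unfolding H_def S_charpoly_def by (intro exI) (auto intro!: derivative_eq_intros dA dB)
  then obtain H' where H': "(H has_real_derivative H') (at x)" ..
  have root: "S_charpoly (A y) (B y) (L y) = 0" if "y \<in> G" for y
    using S_eigenvalues(8)[OF bspec[OF G(3) that]] exhaust_3[of j] by (auto simp: L_def)
  have Hx: "H x = 0" using root[OF G(2)] by (simp add: H_def)
  have HQ: "(L y - L x) * Q y = - H y" if "y \<in> G" for y
    using S_charpoly_diff[of "A y" "B y" "L y" "L x"] root[OF that] by (simp add: Q_def H_def)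
  have Qx: "Q x \<noteq> 0"
    using S_charpoly_deriv_at_eigval[OF bspec[OF G(3) G(2)], of j]
    by (simp add: Q_def L_def power2_eq_square algebra_simps)
  have "isCont Q x" unfolding Q_def by (intro continuous_intros cL cA cB)
  hence tQ: "(Q \<longlongrightarrow> Q x) (at x)" by (simp add: isCont_def)
  have "((\<lambda>y. - ((H y - H x) / (y - x)) / Q y) \<longlongrightarrow> - H' / Q x) (at x)"
    using H' Qx tQ by (intro tendsto_intros) (simp_all add: has_field_derivative_iff)
  moreover have "\<forall>\<^sub>F y in at x. - ((H y - H x) / (y - x)) / Q y = (L y - L x) / (y - x)"
    using eventually_at_in_open'[OF G(1,2)] tendsto_imp_eventually_ne[OF tQ Qx]
  proof eventually_elim
    case (elim y)
    hence "L y - L x = - H y / Q y" using HQ[of y] by (simp add: field_simps)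
    thus ?case using Hx by simp
  qed
  ultimately have "((\<lambda>y. (L y - L x) / (y - x)) \<longlongrightarrow> - H' / Q x) (at x)"
    by (rule Lim_transform_eventually)
  hence "(L has_real_derivative - H' / Q x) (at x)" by (simp add: has_field_derivative_iff)
  thus ?thesis unfolding L_def real_differentiable_def by blast
qed

section \<open>The eigenframe T\<close>

definition S_eigvec :: "real \<Rightarrow> real \<Rightarrow> 3 \<Rightarrow> real^3" where
  "S_eigvec a b j = (if j = 1 then ell1 a b (S_eigval a b 1)
     else if j = 2 then ell2 a b (S_eigval a b 2) else ell3 a b (S_eigval a b 3))"

lemma S_eigvec_eigen:
  assumes "small_hyperbolic a b"
  shows "Smat a b *v S_eigvec a b j = S_eigval a b j *\<^sub>R S_eigvec a b j"
proof -
  have "S_charpoly a b (S_eigval a b k) = 0" for k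
    unfolding S_eigenvalues(8)[OF assms] using exhaust_3[of k] by auto
  thus ?thesis
    using ell_eigenvectors exhaust_3[of j] by (auto simp: S_eigvec_def)
qed

lemma norm_S_eigvec:
  assumes "small_hyperbolic a b"
  shows "3*a \<le> norm (S_eigvec a b 1)" "2*a \<le> norm (S_eigvec a b 2)" "3 \<le> norm (S_eigvec a b 3)"
  using norm_ell_lower_bounds[OF assms] S_eigenvalues(2-7)[OF assms]
  by (simp_all add: S_eigvec_def)

lemma norm_S_eigvec_pos:
  assumes "small_hyperbolic a b"
  shows "0 < norm (S_eigvec a b j)"
  using norm_S_eigvec[OF assms] small_hyperbolicD(1)[OF assms] exhaust_3[of j]
  by (smt (verit))

lemma Tmat_entry: "Tmat a b $ m $ j = S_eigvec a b j $ m / norm (S_eigvec a b j)"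
  using exhaust_3[of j]
  by (auto simp: Tmat_def Let_def transpose_def S_eigvec_def S_eigval_def)

lemma column_Tmat: "column j (Tmat a b) = (1 / norm (S_eigvec a b j)) *\<^sub>R S_eigvec a b j"
  by (simp add: column_def vec_eq_iff Tmat_entry)

lemma orthogonal_matrix_Tmat:
  assumes "small_hyperbolic a b"
  shows "orthogonal_matrix (Tmat a b)"
  unfolding orthogonal_matrix_orthonormal_columns column_Tmat
  using norm_S_eigvec_pos[OF assms]
    orthogonal_eigenvectors_symmetric[OF transpose_Smat S_eigvec_eigen[OF assms] S_eigvec_eigen[OF assms]
      S_eigval_distinct[OF assms]]
  by (auto simp: orthogonal_def)

lemma calA_conj:
  assumes "small_hyperbolic a b"
  shows "calA a b = transpose (Tmat a b) ** Amat a b ** Tmat a b"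
  unfolding calA_def matrix_inv_orthogonal[OF orthogonal_matrix_Tmat[OF assms]] ..

lemma Smat_Tmat:
  assumes "small_hyperbolic a b"
  shows "(Smat a b ** Tmat a b) $ i $ j = S_eigval a b j * Tmat a b $ i $ j"
proof -
  have "(Smat a b ** Tmat a b) $ i $ j = (Smat a b *v column j (Tmat a b)) $ i"
    by (simp add: matrix_matrix_mult_def matrix_vector_mult_def column_def)
  also have "\<dots> = S_eigval a b j * Tmat a b $ i $ j"
    unfolding column_Tmat matrix_vector_mult_scaleR S_eigvec_eigen[OF assms]
    by (simp add: Tmat_entry)
  finally show ?thesis .
qed

definition Tmat_order :: "int^3^3" where
  "Tmat_order = vector [vector [2, 3, 0], vector [1, 0, 5], vector [0, 1, 2]]"

lemma abs_le_sqrt_cube_if_hyperbolic: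
  assumes "small_hyperbolic a b" shows "\<bar>b\<bar> \<le> sqrt a ^ 3 / 2"
proof -
  note a = small_hyperbolicD[OF assms]
  have "(sqrt a ^ 3 / 2)^2 = a^3/4"
    using a by (simp add: power_mult_distrib power2_eq_square power3_eq_cube)
  moreover have "0 < a^3" using a by simp
  ultimately have "b^2 \<le> (sqrt a ^ 3 / 2)^2" using a by linarith
  thus ?thesis using a by (simp add: abs_le_square_iff[symmetric])
qed

lemma abs_divide_le_if_le_mult:
  fixes x c L n :: real
  assumes "\<bar>x\<bar> \<le> c * L" "L \<le> n" "0 \<le> c" "0 < L"
  shows "\<bar>x / n\<bar> \<le> c"
proof -
  have "\<bar>x\<bar> \<le> c * n" using assms by (smt (verit) mult_left_mono)
  thus ?thesis using assms by (simp add: abs_divide pos_divide_le_eq)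
qed

lemma abs_Tmat_le_1: "\<bar>Tmat a b $ m $ j\<bar> \<le> 1"
  unfolding Tmat_entry
  by (cases "S_eigvec a b j = 0")
    (simp_all add: abs_divide divide_le_eq_1 component_le_norm_cart)

lemma abs_S_eigvec_components:
  assumes "small_hyperbolic a b"
  defines "s \<equiv> sqrt a"
  shows "\<bar>S_eigvec a b 1 $ 1\<bar> \<le> (3 * s^2) * (3*a)" "\<bar>S_eigvec a b 1 $ 2\<bar> \<le> (3 * s) * (3*a)"
    "\<bar>S_eigvec a b 2 $ 1\<bar> \<le> (3 * s^3) * (2*a)" "\<bar>S_eigvec a b 2 $ 3\<bar> \<le> (3 * s) * (2*a)"
    "\<bar>S_eigvec a b 3 $ 2\<bar> \<le> (3 * s^5) * 3" "\<bar>S_eigvec a b 3 $ 3\<bar> \<le> (3 * s^2) * 3"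
proof -
  define l where "l = S_eigval a b"
  note a = small_hyperbolicD[OF assms(1)] and L = S_eigenvalues(2-7)[OF assms(1), folded l_def]
  have s: "0 < s" "s^2 = a" "s^3 = s*a" "s^5 = s*a*a"
    using a by (simp_all add: s_def power_numeral_reduce power2_eq_square)
  have b: "\<bar>b\<bar> \<le> s^3/2" using abs_le_sqrt_cube_if_hyperbolic[OF assms(1)] by (simp add: s_def)
  have v: "S_eigvec a b 1 = ell1 a b (l 1)" "S_eigvec a b 2 = ell2 a b (l 2)" "S_eigvec a b 3 = ell3 a b (l 3)"
    by (simp_all add: S_eigvec_def l_def)
  have "\<bar>a*(2*a - l 1)\<bar> \<le> (3 * s^2) * (3*a)"
    using L a s by (simp add: abs_mult power2_eq_square)
  thus "\<bar>S_eigvec a b 1 $ 1\<bar> \<le> (3 * s^2) * (3*a)" by (simp add: v ell1_def)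
  have b3: "\<bar>3*b*(l k - 3)\<bar> \<le> 9/2*(s*a)" if "k = 1 \<or> k = 2" for k
  proof -
    have "\<bar>3*b*(l k - 3)\<bar> \<le> 3*(s^3/2)*3"
      unfolding abs_mult using b L a s that by (intro mult_mono) auto
    thus ?thesis by (simp add: s(3))
  qed
  have "0 < s*a" using s a by simp
  thus "\<bar>S_eigvec a b 1 $ 2\<bar> \<le> (3 * s) * (3*a)" "\<bar>S_eigvec a b 2 $ 3\<bar> \<le> (3 * s) * (2*a)"
    using b3[of 1] b3[of 2] by (simp_all add: v ell1_def ell2_def)
  have ab: "\<bar>-3*a*b\<bar> \<le> 3*a*(s^3/2)"
    using a b by (simp add: abs_mult)
  thus "\<bar>S_eigvec a b 2 $ 1\<bar> \<le> (3 * s^3) * (2*a)"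
    using s a by (simp add: v ell2_def algebra_simps)
  have "3*a*(s^3/2) = 3/2 * s^5" using s by (simp add: s(3,4))
  thus "\<bar>S_eigvec a b 3 $ 2\<bar> \<le> (3 * s^5) * 3"
    using ab s(1) by (simp add: v ell3_def)
  show "\<bar>S_eigvec a b 3 $ 3\<bar> \<le> (3 * s^2) * 3"
    using L a s by (simp add: v ell3_def abs_mult)
qed

lemma mat_bound_Tmat:
  assumes "small_hyperbolic a b"
  shows "mat_bound 3 (sqrt a) Tmat_order (Tmat a b)"
proof -
  have a: "0 < a" using small_hyperbolicD(1)[OF assms] .
  have entry: "\<bar>Tmat a b $ m $ j\<bar> \<le> c"
    if "\<bar>S_eigvec a b j $ m\<bar> \<le> c * L" "L \<le> norm (S_eigvec a b j)" "0 \<le> c" "0 < L" for m j c L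
    unfolding Tmat_entry using that by (rule abs_divide_le_if_le_mult)
  note C = abs_S_eigvec_components[OF assms] and N = norm_S_eigvec[OF assms]
  have le3: "\<bar>Tmat a b $ m $ j\<bar> \<le> 3" for m j using abs_Tmat_le_1[of a b m j] by linarith
  show ?thesis
    unfolding mat_bound_def Tmat_order_def forall_3
    using entry[OF C(1) N(1)] entry[OF C(2) N(1)] entry[OF C(3) N(2)] entry[OF C(4) N(2)]
      entry[OF C(5) N(3)] entry[OF C(6) N(3)] le3 a by simp
qed

definition Smat_deriv :: "real \<Rightarrow> real \<Rightarrow> real \<Rightarrow> real^3^3" where
  "Smat_deriv a a' b' = vector [vector [0, 0, -a'], vector [0, 2*a', 3*b'], vector [-a', 3*b', 2*a*a']]"

definition Amat_deriv :: "real \<Rightarrow> real \<Rightarrow> real^3^3" where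
  "Amat_deriv a' b' = vector [vector [0, a', b'], 0, 0]"

lemma mat_has_derivative_Smat:
  assumes "(A has_real_derivative A') (at x)" "(B has_real_derivative B') (at x)"
  shows "mat_has_derivative (\<lambda>y. Smat (A y) (B y)) (Smat_deriv (A x) A' B') x"
  unfolding mat_has_derivative_def forall_3 Smat_def Smat_deriv_def
  using assms by (auto intro!: derivative_eq_intros)

lemma mat_has_derivative_Amat:
  assumes "(A has_real_derivative A') (at x)" "(B has_real_derivative B') (at x)"
  shows "mat_has_derivative (\<lambda>y. Amat (A y) (B y)) (Amat_deriv A' B') x"
  unfolding mat_has_derivative_def forall_3 Amat_def Amat_deriv_def
  using assms by (auto intro!: derivative_eq_intros)

lemma Tmat_differentiable:
  fixes A B :: "real \<Rightarrow> real"
  assumes G: "open G" "x \<in> G" "\<forall>y\<in>G. small_hyperbolic (A y) (B y)"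
    and dA: "(A has_real_derivative A') (at x)" and dB: "(B has_real_derivative B') (at x)"
  shows "\<exists>T'. mat_has_derivative (\<lambda>y. Tmat (A y) (B y)) T' x"
proof (rule mat_has_derivativeI_differentiable)
  fix m j
  have "A differentiable (at x)" "B differentiable (at x)"
    using dA dB real_differentiable_def by blast+
  moreover have "(\<lambda>y. S_eigval (A y) (B y) k) differentiable (at x)" for k
    by (rule S_eigval_differentiable[OF G dA dB])
  ultimately have "(\<lambda>y. S_eigvec (A y) (B y) j $ i) differentiable (at x)" for i
    using exhaust_3[of i] exhaust_3[of j]
    by (auto simp: S_eigvec_def ell1_def ell2_def ell3_def intro!: derivative_intros)
  moreover have "S_eigvec (A x) (B x) j \<noteq> 0"
    using norm_S_eigvec_pos[of "A x" "B x" j] G by auto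
  ultimately show "(\<lambda>y. Tmat (A y) (B y) $ m $ j) differentiable (at x)"
    unfolding Tmat_entry by (rule differentiable_normalized_component)
qed

section \<open>Estimates for calA\<close>

definition calA_order :: "int^3^3" where
  "calA_order = vector [vector [1, 0, 1], vector [2, 1, 0], vector [3, 2, 5]]"

definition calA_deriv_order :: "int^3^3" where
  "calA_deriv_order = vector [vector [0, -1, 0], vector [1, 0, -1], vector [2, 1, 1]]"

lemma mat_bound_Amat:
  assumes "small_hyperbolic a b"
  shows "mat_bound 1 (sqrt a) (vector [vector [9, 2, 3], vector [0, 9, 9], vector [9, 0, 9]]) (Amat a b)"
proof -
  have "0 < a" using small_hyperbolicD(1)[OF assms] .
  moreover have "\<bar>b\<bar> \<le> sqrt a ^ 3" using abs_le_sqrt_cube_if_hyperbolic[OF assms] by simp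
  ultimately show ?thesis by (simp add: mat_bound_def forall_3 Amat_def)
qed

lemma mat_bound_calA:
  assumes "small_hyperbolic a b"
  shows "mat_bound 81 (sqrt a) calA_order (calA a b)"
proof -
  note s = small_hyperbolic_sqrt[OF assms]
  show ?thesis
    unfolding calA_conj[OF assms]
    using mat_bound_mult_3[OF mat_bound_mult_3[OF mat_bound_transpose[OF mat_bound_Tmat[OF assms]]
        mat_bound_Amat[OF assms] s] mat_bound_Tmat[OF assms] s]
    by (rule mat_bound_mono[OF _ s])
      (simp_all add: calA_order_def Tmat_order_def minplus_mult_3 forall_3 transpose_def)
qed

lemma Tmat_connection:
  fixes A B :: "real \<Rightarrow> real"
  assumes G: "open G" "x \<in> G" "\<forall>y\<in>G. small_hyperbolic (A y) (B y)"
    and dA: "(A has_real_derivative A') (at x)" and dB: "(B has_real_derivative B') (at x)"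
  defines "T \<equiv> Tmat (A x) (B x)" and "l \<equiv> S_eigval (A x) (B x)"
  obtains T' where "mat_has_derivative (\<lambda>y. Tmat (A y) (B y)) T' x"
    and "\<And>j. (transpose T ** T') $ j $ j = 0"
    and "\<And>k j. k \<noteq> j \<Longrightarrow> (l j - l k) * (transpose T ** T') $ k $ j
           = (transpose T ** Smat_deriv (A x) A' B' ** T) $ k $ j"
proof -
  obtain T' where dT: "mat_has_derivative (\<lambda>y. Tmat (A y) (B y)) T' x"
    using Tmat_differentiable[OF G dA dB] by blast
  have "\<forall>j. \<exists>D. ((\<lambda>y. S_eigval (A y) (B y) j) has_real_derivative D) (at x)"
    using S_eigval_differentiable[OF G dA dB] real_differentiable_def by blast
  then obtain l' where dl: "\<And>j. ((\<lambda>y. S_eigval (A y) (B y) j) has_real_derivative l' j) (at x)"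
    by metis
  have orth: "transpose (Tmat (A y) (B y)) ** Tmat (A y) (B y) = mat 1" if "y \<in> G" for y
    using orthogonal_matrix_Tmat G(3) that by (simp add: orthogonal_matrix)
  show ?thesis
  proof (rule that[OF dT])
    show "(transpose T ** T') $ j $ j = 0" for j
      using orthonormal_frame_derivative_skew[OF G(1,2) orth dT] unfolding T_def
      by (metis (no_types) transpose_def vec_lambda_beta neg_equal_zero vector_uminus_component)
    show "(l j - l k) * (transpose T ** T') $ k $ j = (transpose T ** Smat_deriv (A x) A' B' ** T) $ k $ j"
      if "k \<noteq> j" for k j
      unfolding T_def l_def
      by (rule eigenframe_derivative_offdiag[where S = "\<lambda>y. Smat (A y) (B y)"
            and l = "\<lambda>j y. S_eigval (A y) (B y) j", OF G(1,2) _ orth[OF G(2)] transpose_Smat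
            mat_has_derivative_Smat[OF dA dB] dT dl that])
        (use Smat_Tmat G(3) in auto)
  qed
qed

lemma mat_bound_Smat_deriv:
  assumes "small_hyperbolic a b" "\<bar>a'\<bar> \<le> Ka * sqrt a" "\<bar>b'\<bar> \<le> Kb * a"
  shows "mat_bound (2*Ka + 3*Kb) (sqrt a)
    (vector [vector [9, 9, 1], vector [9, 1, 2], vector [1, 2, 3]]) (Smat_deriv a a' b')"
proof -
  define s where "s = sqrt a"
  have s: "0 < s" "s^2 = a" using small_hyperbolicD(1)[OF assms(1)] by (simp_all add: s_def)
  have K: "0 \<le> Ka" "0 \<le> Kb"
    using nonneg_if_abs_le_mult_pos assms(2,3) s small_hyperbolicD(1)[OF assms(1)] by (auto simp: s_def)
  have a': "\<bar>a'\<bar> \<le> Ka * s" and b': "\<bar>b'\<bar> \<le> Kb * s^2" using assms(2,3) s by (simp_all add: s_def)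
  have "\<bar>2*a*a'\<bar> = 2*a*\<bar>a'\<bar>" using s by (simp add: abs_mult flip: s(2))
  also have "\<dots> \<le> 2*a*(Ka * s)" using a' s by (intro mult_left_mono) (auto simp flip: s(2))
  also have "\<dots> = 2*Ka * s^3" by (simp add: power3_eq_cube flip: s(2)) (simp add: power2_eq_square)
  finally have "\<bar>2*a*a'\<bar> \<le> 2*Ka * s^3" .
  moreover have "0 \<le> Kb * s" "0 \<le> Ka * s" "0 \<le> Kb * s^2" "0 \<le> Ka * s^2" "0 \<le> Kb * s^3"
    using K s(1) by simp_all
  ultimately have "\<bar>a'\<bar> \<le> (2*Ka + 3*Kb) * s" "\<bar>2*a'\<bar> \<le> (2*Ka + 3*Kb) * s"
    "\<bar>3*b'\<bar> \<le> (2*Ka + 3*Kb) * s^2" "\<bar>2*a*a'\<bar> \<le> (2*Ka + 3*Kb) * s^3"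
    using a' b' unfolding distrib_right mult.assoc by (simp_all add: abs_mult)
  thus ?thesis
    using K s unfolding mat_bound_def forall_3 Smat_deriv_def s_def[symmetric] by simp
qed

lemma mat_bound_Amat_deriv:
  assumes "small_hyperbolic a b" "\<bar>a'\<bar> \<le> Ka * sqrt a" "\<bar>b'\<bar> \<le> Kb * a"
  shows "mat_bound (Ka + Kb) (sqrt a)
    (vector [vector [9, 1, 2], vector [9, 9, 9], vector [9, 9, 9]]) (Amat_deriv a' b')"
proof -
  define s where "s = sqrt a"
  have s: "0 < s" "s^2 = a" using small_hyperbolicD(1)[OF assms(1)] by (simp_all add: s_def)
  have K: "0 \<le> Ka" "0 \<le> Kb"
    using nonneg_if_abs_le_mult_pos assms(2,3) s small_hyperbolicD(1)[OF assms(1)] by (auto simp: s_def)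
  have a': "\<bar>a'\<bar> \<le> Ka * s" and b': "\<bar>b'\<bar> \<le> Kb * s^2" using assms(2,3) s by (simp_all add: s_def)
  moreover have "0 \<le> Kb * s" "0 \<le> Ka * s^2" using K s(1) by simp_all
  ultimately have "\<bar>a'\<bar> \<le> (Ka + Kb) * s" "\<bar>b'\<bar> \<le> (Ka + Kb) * s^2"
    unfolding distrib_right by linarith+
  thus ?thesis
    using K s unfolding mat_bound_def forall_3 Amat_deriv_def s_def[symmetric] by simp
qed

lemma Tmat_derivative_bound:
  fixes A B :: "real \<Rightarrow> real"
  assumes G: "open G" "x \<in> G" "\<forall>y\<in>G. small_hyperbolic (A y) (B y)"
    and dA: "(A has_real_derivative A') (at x)" and dB: "(B has_real_derivative B') (at x)"
    and A': "\<bar>A'\<bar> \<le> Ka * sqrt (A x)" and B': "\<bar>B'\<bar> \<le> Kb * A x"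
  obtains T' where "mat_has_derivative (\<lambda>y. Tmat (A y) (B y)) T' x"
    and "mat_bound (729 * (2*Ka + 3*Kb)) (sqrt (A x))
           (vector [vector [1, 2, 3], vector [0, 1, 2], vector [1, 0, 1]]) T'"
proof -
  define T where "T = Tmat (A x) (B x)"
  define l where "l = S_eigval (A x) (B x)"
  have hx: "small_hyperbolic (A x) (B x)" using G by blast
  note s = small_hyperbolic_sqrt[OF hx]
  obtain T' where dT: "mat_has_derivative (\<lambda>y. Tmat (A y) (B y)) T' x"
    and diag: "\<And>j. (transpose T ** T') $ j $ j = 0"
    and quot: "\<And>k j. k \<noteq> j \<Longrightarrow> (l j - l k) * (transpose T ** T') $ k $ j
           = (transpose T ** Smat_deriv (A x) A' B' ** T) $ k $ j"
    using Tmat_connection[OF G dA dB] unfolding T_def l_def by blast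
  have gap: "sqrt (A x) powi (vector [vector [0, 2, 0], vector [2, 0, 0], vector [0, 0, 0]] $ k $ j)
      \<le> \<bar>l j - l k\<bar>" if "k \<noteq> j" for k j
    using S_eigval_gaps[OF hx] small_hyperbolicD(1)[OF hx] that exhaust_3[of k] exhaust_3[of j]
    unfolding l_def by auto
  have bK: "mat_bound (3 * (3 * (3 * (2*Ka + 3*Kb)) * 3)) (sqrt (A x))
      (vector [vector [9, 0, 1], vector [0, 9, 2], vector [1, 2, 9]]) (transpose T ** T')"
    using mat_bound_mult_3[OF mat_bound_mult_3[OF mat_bound_transpose[OF mat_bound_Tmat[OF hx]]
        mat_bound_Smat_deriv[OF hx A' B'] s] mat_bound_Tmat[OF hx] s, folded T_def]
    by (rule mat_bound_quotient[OF _ s quot gap diag])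
      (simp_all add: Tmat_order_def minplus_mult_3 forall_3 transpose_def)
  have "T' = T ** (transpose T ** T')"
    using orthogonal_matrix_Tmat[OF hx] by (simp add: T_def orthogonal_matrix_def matrix_mul_assoc)
  hence "mat_bound (3 * (3 * (3 * (3 * (3 * (2*Ka + 3*Kb)) * 3)))) (sqrt (A x))
      (minplus_mult Tmat_order (vector [vector [9, 0, 1], vector [0, 9, 2], vector [1, 2, 9]])) T'"
    using mat_bound_mult_3[OF mat_bound_Tmat[OF hx] bK s] by (simp add: T_def)
  hence "mat_bound (729 * (2*Ka + 3*Kb)) (sqrt (A x))
      (vector [vector [1, 2, 3], vector [0, 1, 2], vector [1, 0, 1]]) T'"
    by (rule mat_bound_mono[OF _ s]) (simp_all add: Tmat_order_def minplus_mult_3 forall_3)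
  with dT show ?thesis by (rule that)
qed

lemma calA_derivative_bound:
  fixes A B :: "real \<Rightarrow> real"
  assumes G: "open G" "x \<in> G" "\<forall>y\<in>G. small_hyperbolic (A y) (B y)"
    and dA: "(A has_real_derivative A') (at x)" and dB: "(B has_real_derivative B') (at x)"
    and A': "\<bar>A'\<bar> \<le> Ka * sqrt (A x)" and B': "\<bar>B'\<bar> \<le> Kb * A x"
  obtains D where "mat_has_derivative (\<lambda>y. calA (A y) (B y)) D x"
    and "mat_bound (2 * 10^5 * (Ka + Kb)) (sqrt (A x)) calA_deriv_order D"
proof -
  define T where "T = Tmat (A x) (B x)"
  define Am where "Am = Amat (A x) (B x)"
  have hx: "small_hyperbolic (A x) (B x)" using G by blast
  note s = small_hyperbolic_sqrt[OF hx]
  have K: "0 \<le> Ka" "0 \<le> Kb"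
    using nonneg_if_abs_le_mult_pos A' B' s small_hyperbolicD(1)[OF hx] by auto
  obtain T' where dT: "mat_has_derivative (\<lambda>y. Tmat (A y) (B y)) T' x"
    and bT': "mat_bound (729 * (2*Ka + 3*Kb)) (sqrt (A x))
           (vector [vector [1, 2, 3], vector [0, 1, 2], vector [1, 0, 1]]) T'"
    by (rule Tmat_derivative_bound[OF G dA dB A' B'])
  note bT = mat_bound_Tmat[OF hx, folded T_def] and bA = mat_bound_Amat[OF hx, folded Am_def]
  have "mat_has_derivative (\<lambda>y. transpose (Tmat (A y) (B y)) ** Amat (A y) (B y) ** Tmat (A y) (B y))
      ((transpose T' ** Am + transpose T ** Amat_deriv A' B') ** T + (transpose T ** Am) ** T') x"
    unfolding T_def Am_def
    by (intro mat_has_derivative_mult mat_has_derivative_transpose mat_has_derivative_Amat dT dA dB)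
  hence "mat_has_derivative (\<lambda>y. calA (A y) (B y))
      (transpose T' ** Am ** T + transpose T ** Amat_deriv A' B' ** T + transpose T ** Am ** T') x"
    unfolding matrix_add_rdistrib
    by (rule mat_has_derivative_transform_open[OF _ G(1,2)]) (simp add: calA_conj G(3))
  moreover have "mat_bound (19683 * (2*Ka + 3*Kb)) (sqrt (A x)) calA_deriv_order (transpose T' ** Am ** T)"
    using mat_bound_mult_3[OF mat_bound_mult_3[OF mat_bound_transpose[OF bT'] bA s] bT s]
    by (rule mat_bound_mono[OF _ s])
      (simp_all add: calA_deriv_order_def Tmat_order_def minplus_mult_3 forall_3 transpose_def)
  moreover have "mat_bound (81 * (Ka + Kb)) (sqrt (A x)) calA_deriv_order (transpose T ** Amat_deriv A' B' ** T)"
    using mat_bound_mult_3[OF mat_bound_mult_3[OF mat_bound_transpose[OF bT]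
        mat_bound_Amat_deriv[OF hx A' B'] s] bT s]
    by (rule mat_bound_mono[OF _ s])
      (simp_all add: calA_deriv_order_def Tmat_order_def minplus_mult_3 forall_3 transpose_def)
  moreover have "mat_bound (19683 * (2*Ka + 3*Kb)) (sqrt (A x)) calA_deriv_order (transpose T ** Am ** T')"
    using mat_bound_mult_3[OF mat_bound_mult_3[OF mat_bound_transpose[OF bT] bA s] bT' s]
    by (rule mat_bound_mono[OF _ s])
      (simp_all add: calA_deriv_order_def Tmat_order_def minplus_mult_3 forall_3 transpose_def)
  ultimately show ?thesis
    using K by (elim that mat_bound_mono[OF mat_bound_add[OF mat_bound_add] s]) auto
qed

lemma calA_estimates_at:
  fixes a b :: "real \<Rightarrow> real \<Rightarrow> real"
  assumes U: "open U" "(t, x) \<in> U"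
    and hyp: "\<And>y. (t, y) \<in> U \<Longrightarrow> small_hyperbolic (a t y) (b t y)"
    and deriv: "\<exists>a' b'. ((\<lambda>y. a t y) has_real_derivative a') (at x) \<and>
      ((\<lambda>y. b t y) has_real_derivative b') (at x) \<and> \<bar>a'\<bar> \<le> Ka * sqrt (a t x) \<and> \<bar>b'\<bar> \<le> Kb * a t x"
    and C: "81 \<le> C" "2 * 10^5 * (Ka + Kb) \<le> C"
  shows "let M = calA (a t x) (b t x);
           Mx = (\<lambda>i j g. \<exists>D. ((\<lambda>y. calA (a t y) (b t y) $ i $ j) has_real_derivative D) (at x)
                                \<and> \<bar>D\<bar> \<le> C * g);
           A = a t x
       in card (eigvals (Smat (a t x) (b t x))) = 3 \<and>
          \<bar>M$1$1\<bar> \<le> C * sqrt A \<and> \<bar>M$1$2\<bar> \<le> C \<and> \<bar>M$1$3\<bar> \<le> C * sqrt A \<and>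
          \<bar>M$2$1\<bar> \<le> C * A \<and> \<bar>M$2$2\<bar> \<le> C * sqrt A \<and> \<bar>M$2$3\<bar> \<le> C \<and>
          \<bar>M$3$1\<bar> \<le> C * A powr (3/2) \<and> \<bar>M$3$2\<bar> \<le> C * A \<and> \<bar>M$3$3\<bar> \<le> C * A powr (5/2) \<and>
          Mx 1 1 1 \<and> Mx 1 2 (1 / sqrt A) \<and> Mx 1 3 1 \<and>
          Mx 2 1 (sqrt A) \<and> Mx 2 2 1 \<and> Mx 2 3 (1 / sqrt A) \<and>
          Mx 3 1 A \<and> Mx 3 2 (sqrt A) \<and> Mx 3 3 (sqrt A)"
proof -
  have "open (Pair t -` U)" by (rule continuous_open_vimage[OF U(1)]) (intro continuous_intros)
  hence G: "open {y. (t, y) \<in> U}" "x \<in> {y. (t, y) \<in> U}"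
    "\<forall>y\<in>{y. (t, y) \<in> U}. small_hyperbolic (a t y) (b t y)"
    using U(2) hyp by (simp_all add: vimage_def)
  obtain a' b' where d: "((\<lambda>y. a t y) has_real_derivative a') (at x)"
    "((\<lambda>y. b t y) has_real_derivative b') (at x)" "\<bar>a'\<bar> \<le> Ka * sqrt (a t x)" "\<bar>b'\<bar> \<le> Kb * a t x"
    using deriv by blast
  obtain D where D: "mat_has_derivative (\<lambda>y. calA (a t y) (b t y)) D x"
    "mat_bound (2 * 10^5 * (Ka + Kb)) (sqrt (a t x)) calA_deriv_order D"
    by (rule calA_derivative_bound[OF G d])
  have hx: "small_hyperbolic (a t x) (b t x)" using hyp[OF U(2)] .
  note s = small_hyperbolic_sqrt[OF hx] and apos = small_hyperbolicD(1)[OF hx]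
  have "\<forall>i j. \<bar>calA (a t x) (b t x) $ i $ j\<bar> \<le> C * sqrt (a t x) powi (calA_order $ i $ j)"
    using mat_bound_entry_le[OF mat_bound_calA[OF hx] s(1) C(1)] by blast
  moreover have "\<forall>i j. \<exists>D. ((\<lambda>y. calA (a t y) (b t y) $ i $ j) has_real_derivative D) (at x)
      \<and> \<bar>D\<bar> \<le> C * sqrt (a t x) powi (calA_deriv_order $ i $ j)"
    using D(1) mat_bound_entry_le[OF D(2) s(1) C(2)] unfolding mat_has_derivative_def by blast
  ultimately show ?thesis
    unfolding Let_def using card_eigvals_Smat[OF hx]
    by (simp add: forall_3 calA_order_def calA_deriv_order_def sqrt_power_odd[OF apos]
        less_imp_le[OF apos] inverse_eq_divide)
qed

section \<open>The regime near the degenerate point\<close>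

lemma smooth_bdd_x_derivatives:
  assumes "smooth_bdd D f"
  obtains M df ddf dddf where "0 \<le> M"
    and "\<And>t x. (t, x) \<in> D \<Longrightarrow> ((\<lambda>y. f t y) has_real_derivative df t x) (at x) \<and>
      ((\<lambda>y. df t y) has_real_derivative ddf t x) (at x) \<and>
      ((\<lambda>y. ddf t y) has_real_derivative dddf t x) (at x) \<and> \<bar>ddf t x\<bar> \<le> M \<and> \<bar>dddf t x\<bar> \<le> M"
proof -
  have x_derivative: "\<exists>g. (\<forall>(t, x)\<in>D. ((\<lambda>y. h t y) has_real_derivative g t x) (at x)) \<and> smooth_bdd D g"
    if "smooth_bdd D h" for h
    using that by (cases rule: smooth_bdd.cases) blast
  have bounded: "\<exists>B. \<forall>p\<in>D. \<bar>h (fst p) (snd p)\<bar> \<le> B" if "smooth_bdd D h" for h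
    using that by (cases rule: smooth_bdd.cases) blast
  obtain df where d1: "\<forall>(t, x)\<in>D. ((\<lambda>y. f t y) has_real_derivative df t x) (at x)"
    and s1: "smooth_bdd D df" using x_derivative[OF assms] by blast
  obtain ddf where d2: "\<forall>(t, x)\<in>D. ((\<lambda>y. df t y) has_real_derivative ddf t x) (at x)"
    and s2: "smooth_bdd D ddf" using x_derivative[OF s1] by blast
  obtain dddf where d3: "\<forall>(t, x)\<in>D. ((\<lambda>y. ddf t y) has_real_derivative dddf t x) (at x)"
    and s3: "smooth_bdd D dddf" using x_derivative[OF s2] by blast
  obtain B2 B3 where "\<forall>p\<in>D. \<bar>ddf (fst p) (snd p)\<bar> \<le> B2" "\<forall>p\<in>D. \<bar>dddf (fst p) (snd p)\<bar> \<le> B3"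
    using bounded[OF s2] bounded[OF s3] by blast
  hence "\<And>t x. (t, x) \<in> D \<Longrightarrow> \<bar>ddf t x\<bar> \<le> max (max B2 B3) 0 \<and> \<bar>dddf t x\<bar> \<le> max (max B2 B3) 0"
    by fastforce
  thus ?thesis using that[of "max (max B2 B3) 0" df ddf dddf] d1 d2 d3 by fastforce
qed

lemma local_regime:
  fixes a b :: "real \<Rightarrow> real \<Rightarrow> real" and W :: "real set" and c Tm :: real
  assumes W: "open W" "0 \<in> W" and cT: "c > 0" "Tm > 0"
    and sa: "smooth_bdd ({-c<..<Tm} \<times> W) a" and sb: "smooth_bdd ({-c<..<Tm} \<times> W) b"
    and disc: "\<forall>t\<in>{0..<Tm}. \<forall>x\<in>W. 4 * (a t x)^3 - 27 * (b t x)^2 \<ge> 0"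
    and a00: "a 0 0 = 0" and apos: "\<forall>t\<in>{0<..<Tm}. \<forall>x\<in>W. a t x > 0"
  obtains U Ka Kb where "open U" "(0, 0) \<in> U" "0 \<le> Ka" "0 \<le> Kb"
    and "\<And>t x. (t, x) \<in> U \<Longrightarrow> 0 < t \<Longrightarrow> small_hyperbolic (a t x) (b t x)"
    and "\<And>t x. (t, x) \<in> U \<Longrightarrow> 0 < t \<Longrightarrow> \<exists>a' b'.
           ((\<lambda>y. a t y) has_real_derivative a') (at x) \<and> ((\<lambda>y. b t y) has_real_derivative b') (at x) \<and>
           \<bar>a'\<bar> \<le> Ka * sqrt (a t x) \<and> \<bar>b'\<bar> \<le> Kb * a t x"
proof -
  define D where "D = {-c<..<Tm} \<times> W"
  obtain a1 a2 a3 Ma where Ma: "0 \<le> Ma" and da: "\<And>t x. (t, x) \<in> D \<Longrightarrow>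
      ((\<lambda>y. a t y) has_real_derivative a1 t x) (at x) \<and> ((\<lambda>y. a1 t y) has_real_derivative a2 t x) (at x) \<and>
      ((\<lambda>y. a2 t y) has_real_derivative a3 t x) (at x) \<and> \<bar>a2 t x\<bar> \<le> Ma \<and> \<bar>a3 t x\<bar> \<le> Ma"
    using smooth_bdd_x_derivatives[OF sa[folded D_def]] by blast
  obtain b1 b2 b3 Mb where Mb: "0 \<le> Mb" and db: "\<And>t x. (t, x) \<in> D \<Longrightarrow>
      ((\<lambda>y. b t y) has_real_derivative b1 t x) (at x) \<and> ((\<lambda>y. b1 t y) has_real_derivative b2 t x) (at x) \<and>
      ((\<lambda>y. b2 t y) has_real_derivative b3 t x) (at x) \<and> \<bar>b2 t x\<bar> \<le> Mb \<and> \<bar>b3 t x\<bar> \<le> Mb"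
    using smooth_bdd_x_derivatives[OF sb[folded D_def]] by blast
  obtain r where r: "0 < r" "\<And>y. \<bar>y\<bar> < 2 * r \<Longrightarrow> y \<in> W"
  proof -
    obtain e where "0 < e" "ball 0 e \<subseteq> W" using open_contains_ball W by blast
    thus ?thesis by (intro that[of "e/2"]) (auto simp: dist_real_def)
  qed
  define eps where "eps = min (1/100) (r^2)"
  define U where "U = (D \<inter> (\<lambda>p. a (fst p) (snd p)) -` {..<eps}) \<inter> (UNIV \<times> {-r<..<r})"
  have "open D" unfolding D_def using W(1) by (intro open_Times) auto
  moreover have "continuous_on D (\<lambda>p. a (fst p) (snd p))"
    using sa[folded D_def] by (cases rule: smooth_bdd.cases) blast
  ultimately have U_open: "open U"
    unfolding U_def by (intro open_Int continuous_open_preimage open_Times) auto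
  have U0: "(0, 0) \<in> U"
    using W(2) cT a00 r(1) by (simp add: U_def D_def eps_def)
  have inU: "t < Tm \<and> x \<in> W \<and> \<bar>x\<bar> < r \<and> 0 < a t x \<and> a t x < eps"
    if "(t, x) \<in> U" "0 < t" for t x
  proof -
    have "t < Tm" "x \<in> W" "\<bar>x\<bar> < r" "a t x < eps" using that(1) by (auto simp: U_def D_def)
    moreover have "0 < a t x" using apos that(2) calculation(1,2) by simp
    ultimately show ?thesis by blast
  qed
  have hyp: "small_hyperbolic (a t x) (b t x)" if "(t, x) \<in> U" "0 < t" for t x
  proof -
    have "0 \<le> 4 * (a t x)^3 - 27 * (b t x)^2" using disc inU[OF that] that(2) by simp
    thus ?thesis using inU[OF that] unfolding small_hyperbolic_def eps_def by linarith
  qed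
  define M where "M = max Ma Mb"
  have deriv: "\<exists>a' b'. ((\<lambda>y. a t y) has_real_derivative a') (at x) \<and> ((\<lambda>y. b t y) has_real_derivative b') (at x) \<and>
      \<bar>a'\<bar> \<le> (1 + M/2) * sqrt (a t x) \<and> \<bar>b'\<bar> \<le> ((2 + M)^2 + M/6) * a t x"
    if tx: "(t, x) \<in> U" "0 < t" for t x
  proof (intro exI conjI)
    note pt = inU[OF tx]
    have "sqrt (a t x) < r" using real_sqrt_less_mono[of "a t x" "r^2"] pt r(1) by (simp add: eps_def)
    hence inW: "y \<in> W" if "y \<in> {x - sqrt (a t x)..x + sqrt (a t x)}" for y
      using r(2)[of y] pt that by (simp add: abs_le_iff abs_less_iff)
    hence inD: "(t, y) \<in> D" if "y \<in> {x - sqrt (a t x)..x + sqrt (a t x)}" for y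
      using that pt tx(2) cT by (simp add: D_def)
    have "y \<in> W" if "y \<in> {x - sqrt (a t x), x + sqrt (a t x)}" for y
      using inW[of y] that pt by auto
    hence ends: "0 \<le> a t y \<and> 27 * (b t y)^2 \<le> 4 * (a t y)^3"
      if "y \<in> {x - sqrt (a t x), x + sqrt (a t x)}" for y
      using that apos disc tx(2) pt by (auto intro: less_imp_le)
    have "0 < a t x" using pt by blast
    note GP = glaeser_hyperbolic_pair[where g = "a t" and f = "b t", OF this]
    show "\<bar>a1 t x\<bar> \<le> (1 + M/2) * sqrt (a t x)" "\<bar>b1 t x\<bar> \<le> ((2 + M)^2 + M/6) * a t x"
      by (rule GP; use Ma ends da[OF inD] db[OF inD] in \<open>force simp: M_def\<close>)+
    show "((\<lambda>y. a t y) has_real_derivative a1 t x) (at x)" "((\<lambda>y. b t y) has_real_derivative b1 t x) (at x)"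
      using da[of t x] db[of t x] pt tx(2) cT by (simp_all add: D_def)
  qed
  have "0 \<le> 1 + M/2" "0 \<le> (2 + M)^2 + M/6" using Ma by (simp_all add: M_def)
  from that[OF U_open U0 this hyp deriv] show ?thesis .
qed

theorem lemma3p2:
  fixes a b :: "real \<Rightarrow> real \<Rightarrow> real" and W :: "real set" and c Tm :: real
  assumes W: "open W" "is_interval W" "0 \<in> W"
    and cT: "c > 0" "Tm > 0"
    and sa: "smooth_bdd ({-c<..<Tm} \<times> W) a"
    and sb: "smooth_bdd ({-c<..<Tm} \<times> W) b"
    and disc: "\<forall>t\<in>{0..<Tm}. \<forall>x\<in>W. 4 * (a t x)^3 - 27 * (b t x)^2 \<ge> 0"
    and a00: "a 0 0 = 0"
    and apos: "\<forall>t\<in>{0<..<Tm}. \<forall>x\<in>W. a t x > 0"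
  shows "\<exists>U C. open U \<and> (0, 0) \<in> U \<and> C > 0 \<and>
    (\<forall>(t, x)\<in>U. t > 0 \<longrightarrow>
      (let M = calA (a t x) (b t x);
           Mx = (\<lambda>i j g. \<exists>D. ((\<lambda>y. calA (a t y) (b t y) $ i $ j) has_real_derivative D) (at x)
                                \<and> \<bar>D\<bar> \<le> C * g);
           A = a t x
       in card (eigvals (Smat (a t x) (b t x))) = 3 \<and>
          \<bar>M$1$1\<bar> \<le> C * sqrt A \<and> \<bar>M$1$2\<bar> \<le> C \<and> \<bar>M$1$3\<bar> \<le> C * sqrt A \<and>
          \<bar>M$2$1\<bar> \<le> C * A \<and> \<bar>M$2$2\<bar> \<le> C * sqrt A \<and> \<bar>M$2$3\<bar> \<le> C \<and>
          \<bar>M$3$1\<bar> \<le> C * A powr (3/2) \<and> \<bar>M$3$2\<bar> \<le> C * A \<and> \<bar>M$3$3\<bar> \<le> C * A powr (5/2) \<and>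
          Mx 1 1 1 \<and> Mx 1 2 (1 / sqrt A) \<and> Mx 1 3 1 \<and>
          Mx 2 1 (sqrt A) \<and> Mx 2 2 1 \<and> Mx 2 3 (1 / sqrt A) \<and>
          Mx 3 1 A \<and> Mx 3 2 (sqrt A) \<and> Mx 3 3 (sqrt A)))"
proof -
  obtain U Ka Kb where U: "open U" "(0, 0) \<in> U" and K: "0 \<le> Ka" "0 \<le> Kb"
    and hyp: "\<And>t x. (t, x) \<in> U \<Longrightarrow> 0 < t \<Longrightarrow> small_hyperbolic (a t x) (b t x)"
    and deriv: "\<And>t x. (t, x) \<in> U \<Longrightarrow> 0 < t \<Longrightarrow> \<exists>a' b'.
           ((\<lambda>y. a t y) has_real_derivative a') (at x) \<and> ((\<lambda>y. b t y) has_real_derivative b') (at x) \<and>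
           \<bar>a'\<bar> \<le> Ka * sqrt (a t x) \<and> \<bar>b'\<bar> \<le> Kb * a t x"
    by (rule local_regime[OF W(1,3) cT sa sb disc a00 apos]) blast
  define C :: real where "C = 81 + 2 * 10^5 * (Ka + Kb)"
  have C: "0 < C" "81 \<le> C" "2 * 10^5 * (Ka + Kb) \<le> C" using K by (simp_all add: C_def)
  show ?thesis
    by (intro exI[of _ U] exI[of _ C] conjI U C(1) ballI, clarify, rule calA_estimates_at[OF U(1)])
      (use hyp deriv C(2,3) in auto)
qed

end
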